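(* Suppose $N\geq2$. Let $l\geq1$ and let $i,j$ be the integers with $l+1=i+j(N-1)$, $j\ge0$, $1\le i\le N-1$. There is a derivation $\partial_l:A\to A$, homogeneous of degree $l$, such that \[ \partial_l(x)=x^iy^j,\qquad \partial_l(y)=\sum_{s+2+t=N}(s+1)\,x^{s+i}y^jx^t+(N-i)\,x^{i-1}\Phi_{j+1} \] (the sum over $s,t\ge0$), and its cohomology class spans $\mathrm{HH}^1(A)_l$.
   Context: Let $\Bbbk$ be a field of characteristic zero and $N\geq2$ an integer. Let $A=A_N$ be the $\Bbbk$-algebra generated by $x,y$ subject to $yx-xy=x^N$, graded with $x$ in degree $1$, $y$ in degree $N-1$. For $k\ge1$, $\Phi_k$ is the unique element of $Ay$, homogeneous of degree $k(N-1)$, with $\Phi_kx-x\Phi_k=x^Ny^{k-1}$. $\mathrm{HH}^1(A)=\mathrm{Der}(A)/\mathrm{InnDer}(A)$ with grading given by derivations $d$ with $d(A_p)\subseteq A_{p+l}$. *)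

theory Defs
  imports Main
begin

text \<open>The free associative algebra k<x,y>: finitely supported functions on words
  over the alphabet bool, where False stands for the letter x and True for y.
  A = A_N is the quotient of this free algebra by the two-sided ideal generated by
  yx - xy - x^N; elements of A are represented by free-algebra elements modulo that ideal.\<close>

type_synonym 'k fa = "bool list \<Rightarrow> 'k"

definition fa_carrier :: "'k::zero fa set" where
  "fa_carrier = {f. finite {w. f w \<noteq> 0}}"

definition fa_zero :: "'k::zero fa" where "fa_zero = (\<lambda>_. 0)"
definition fa_one :: "'k::{zero,one} fa" where "fa_one = (\<lambda>w. if w = [] then 1 else 0)"
definition fa_add :: "'k::plus fa \<Rightarrow> 'k fa \<Rightarrow> 'k fa" where "fa_add f g = (\<lambda>w. f w + g w)"
definition fa_sub :: "'k::minus fa \<Rightarrow> 'k fa \<Rightarrow> 'k fa" where "fa_sub f g = (\<lambda>w. f w - g w)"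
definition fa_smul :: "'k::times \<Rightarrow> 'k fa \<Rightarrow> 'k fa" where "fa_smul c f = (\<lambda>w. c * f w)"

definition fa_mul :: "'k::comm_semiring_1 fa \<Rightarrow> 'k fa \<Rightarrow> 'k fa" where
  "fa_mul f g = (\<lambda>w. \<Sum>n\<le>length w. f (take n w) * g (drop n w))"

definition fa_pow :: "'k::comm_semiring_1 fa \<Rightarrow> nat \<Rightarrow> 'k fa" where
  "fa_pow f n = ((fa_mul f) ^^ n) fa_one"

definition fa_x :: "'k::{zero,one} fa" where "fa_x = (\<lambda>w. if w = [False] then 1 else 0)"
definition fa_y :: "'k::{zero,one} fa" where "fa_y = (\<lambda>w. if w = [True] then 1 else 0)"

definition relator :: "nat \<Rightarrow> 'k::comm_ring_1 fa" where
  "relator N = fa_sub (fa_sub (fa_mul fa_y fa_x) (fa_mul fa_x fa_y)) (fa_pow fa_x N)"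

inductive_set rel_ideal :: "nat \<Rightarrow> 'k::comm_ring_1 fa set" for N where
  gen: "relator N \<in> rel_ideal N"
| zero: "fa_zero \<in> rel_ideal N"
| add: "f \<in> rel_ideal N \<Longrightarrow> g \<in> rel_ideal N \<Longrightarrow> fa_add f g \<in> rel_ideal N"
| mult_left: "f \<in> rel_ideal N \<Longrightarrow> u \<in> fa_carrier \<Longrightarrow> fa_mul u f \<in> rel_ideal N"
| mult_right: "f \<in> rel_ideal N \<Longrightarrow> u \<in> fa_carrier \<Longrightarrow> fa_mul f u \<in> rel_ideal N"

definition eqA :: "nat \<Rightarrow> 'k::comm_ring_1 fa \<Rightarrow> 'k fa \<Rightarrow> bool" where
  "eqA N f g \<longleftrightarrow> fa_sub f g \<in> rel_ideal N"

definition wdeg :: "nat \<Rightarrow> bool list \<Rightarrow> nat" where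
  "wdeg N w = length (filter Not w) + (N - 1) * length (filter id w)"

definition fa_homog :: "nat \<Rightarrow> nat \<Rightarrow> 'k::zero fa \<Rightarrow> bool" where
  "fa_homog N p f \<longleftrightarrow> (\<forall>w. f w \<noteq> 0 \<longrightarrow> wdeg N w = p)"

definition homogA :: "nat \<Rightarrow> nat \<Rightarrow> 'k::comm_ring_1 fa \<Rightarrow> bool" where
  "homogA N p f \<longleftrightarrow> (\<exists>h\<in>fa_carrier. fa_homog N p h \<and> eqA N f h)"

definition is_derA :: "nat \<Rightarrow> ('k::comm_ring_1 fa \<Rightarrow> 'k fa) \<Rightarrow> bool" where
  "is_derA N D \<longleftrightarrow>
     (\<forall>f\<in>fa_carrier. D f \<in> fa_carrier) \<and>
     (\<forall>f\<in>fa_carrier. \<forall>g\<in>fa_carrier. eqA N f g \<longrightarrow> eqA N (D f) (D g)) \<and>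
     (\<forall>c. \<forall>f\<in>fa_carrier. \<forall>g\<in>fa_carrier.
        eqA N (D (fa_add (fa_smul c f) g)) (fa_add (fa_smul c (D f)) (D g))) \<and>
     (\<forall>f\<in>fa_carrier. \<forall>g\<in>fa_carrier.
        eqA N (D (fa_mul f g)) (fa_add (fa_mul (D f) g) (fa_mul f (D g))))"

definition homog_derA :: "nat \<Rightarrow> nat \<Rightarrow> ('k::comm_ring_1 fa \<Rightarrow> 'k fa) \<Rightarrow> bool" where
  "homog_derA N l D \<longleftrightarrow>
     (\<forall>p. \<forall>f\<in>fa_carrier. homogA N p f \<longrightarrow> homogA N (p + l) (D f))"

definition is_Phi :: "nat \<Rightarrow> nat \<Rightarrow> 'k::comm_ring_1 fa \<Rightarrow> bool" where
  "is_Phi N k f \<longleftrightarrow> f \<in> fa_carrier \<and>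
     (\<exists>g\<in>fa_carrier. eqA N f (fa_mul g fa_y)) \<and>
     homogA N (k * (N - 1)) f \<and>
     eqA N (fa_sub (fa_mul f fa_x) (fa_mul fa_x f)) (fa_mul (fa_pow fa_x N) (fa_pow fa_y (k - 1)))"

definition Phi :: "nat \<Rightarrow> nat \<Rightarrow> 'k::comm_ring_1 fa" where
  "Phi N k = (SOME f. is_Phi N k f)"

end

theory Submission
  imports Defs "HOL-Library.Poly_Mapping"
begin

text \<open>
  A = k<x,y>/(yx - xy - x^N) acts faithfully on functions \<nat> \<times> \<nat> \<Rightarrow> k: x shifts the first
  index and y acts by y x^a y^b = x^a y^(b+1) + a x^(a+N-1) y^b, which is forced by
  y x^a = x^a y + a x^(a+N-1). Every word is congruent modulo the relation to a combination of the
  monomials x^a y^b, and these act by linearly independent operators, so they form a basis of A and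
  A can be replaced by this algebra of operators.

  Let D be a derivation of degree l. Up to terms of smaller y-degree, every monomial x^a y^b with
  a \<ge> N is a commutator [\<Psi> y, x]; so after subtracting an inner derivation, D(x) is a combination of
  x^i y^j and y^(j+1), the only monomials of degree l+1 and x-degree < N. Applying D - \<alpha> \<partial>_l to the
  relation kills the y^(j+1) term; the resulting derivation vanishes on x, hence maps y into the
  centralizer of x, which in degree l+N-1 is spanned by x^(l+N-1) = [y, x^l]/l, and one more inner
  derivation removes it. That \<partial>_l is well defined amounts to its respecting the relator, a
  telescoping identity using \<Phi>_(j+1) x - x \<Phi>_(j+1) = x^N y^j.
\<close>

section \<open>The free algebra as polynomial mappings on words\<close>

text \<open>Words form a monoid under concatenation, so the convolution product of finitely
  supported functions on words is the product of k<x,y>.\<close>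

datatype word = Wd (letters: "bool list")

instantiation word :: monoid_add
begin
definition zero_word :: word where "zero_word = Wd []"
definition plus_word :: "word \<Rightarrow> word \<Rightarrow> word" where "plus_word a b = Wd (letters a @ letters b)"
instance by standard (auto simp: zero_word_def plus_word_def)
end

lemma plus_Wd[simp]: "Wd a + Wd b = Wd (a @ b)" by (simp add: plus_word_def)
lemma zero_Wd: "0 = Wd []" by (simp add: zero_word_def)

type_synonym 'k fpm = "word \<Rightarrow>\<^sub>0 'k"

definition pm_of :: "'k::zero fa \<Rightarrow> 'k fpm" where
  "pm_of f = Abs_poly_mapping (\<lambda>w. f (letters w))"
definition fa_of :: "'k::zero fpm \<Rightarrow> 'k fa" where
  "fa_of p = (\<lambda>l. Poly_Mapping.lookup p (Wd l))"

lemma finite_nonzero_letters: "f \<in> fa_carrier \<Longrightarrow> finite {w. f (letters w) \<noteq> 0}"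
proof -
  assume "f \<in> fa_carrier"
  hence "finite {l. f l \<noteq> 0}" by (simp add: fa_carrier_def)
  hence "finite (Wd ` {l. f l \<noteq> 0})" by simp
  moreover have "{w. f (letters w) \<noteq> 0} \<subseteq> Wd ` {l. f l \<noteq> 0}"
    by (auto intro: image_eqI[where x="letters _"])
  ultimately show ?thesis using finite_subset by blast
qed

lemma lookup_pm_of: "f \<in> fa_carrier \<Longrightarrow> Poly_Mapping.lookup (pm_of f) w = f (letters w)"
  unfolding pm_of_def by (subst lookup_Abs_poly_mapping[OF finite_nonzero_letters]) auto

lemma fa_of_pm_of[simp]: "f \<in> fa_carrier \<Longrightarrow> fa_of (pm_of f) = f"
  by (auto simp: fa_of_def lookup_pm_of)

lemma fa_of_carrier[simp]: "fa_of p \<in> fa_carrier"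
proof -
  have "{l. Poly_Mapping.lookup p (Wd l) \<noteq> 0} = letters ` Poly_Mapping.keys p"
    by (auto simp: in_keys_iff intro: image_eqI[where x="Wd _"])
  thus ?thesis by (simp add: fa_carrier_def fa_of_def)
qed

lemma pm_of_fa_of[simp]: "pm_of (fa_of p) = p"
  by (rule poly_mapping_eqI) (simp add: lookup_pm_of[OF fa_of_carrier, unfolded fa_of_def] fa_of_def)

lemma fa_of_inj: "fa_of p = fa_of q \<Longrightarrow> p = q"
  by (metis pm_of_fa_of)

lemma Sum_any_prefix_split:
  "(\<Sum>r. (g r when Wd L = a + r)) =
   (if take (length (letters a)) L = letters a then g (Wd (drop (length (letters a)) L)) else 0)"
proof -
  have eq: "(\<lambda>r. (g r when Wd L = a + r)) =
     (\<lambda>r. if r = Wd (drop (length (letters a)) L) then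
             (if take (length (letters a)) L = letters a then g r else 0) else 0)"
  proof
    fix r
    have "Wd L = a + r \<longleftrightarrow> L = letters a @ letters r"
      by (cases a; cases r) auto
    also have "\<dots> \<longleftrightarrow> (r = Wd (drop (length (letters a)) L) \<and> take (length (letters a)) L = letters a)"
      by (cases r) (auto simp: append_eq_conv_conj, metis append_take_drop_id)
    finally show "(g r when Wd L = a + r) = (if r = Wd (drop (length (letters a)) L) then
             (if take (length (letters a)) L = letters a then g r else 0) else 0)"
      by auto
  qed
  show ?thesis unfolding eq Sum_any.delta by simp
qed

lemma lookup_mult_word:
  "Poly_Mapping.lookup (p * q) (Wd L) =
   (\<Sum>n\<le>length L. Poly_Mapping.lookup p (Wd (take n L)) * Poly_Mapping.lookup q (Wd (drop n L)))"
proof -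
  let ?f = "Poly_Mapping.lookup p" and ?g = "Poly_Mapping.lookup q"
  let ?h = "\<lambda>a. ?f a * (if take (length (letters a)) L = letters a then ?g (Wd (drop (length (letters a)) L)) else 0)"
  have "Poly_Mapping.lookup (p * q) (Wd L) = (\<Sum>a. ?h a)"
    by (simp add: lookup_mult Sum_any_prefix_split)
  also have "\<dots> = sum ?h ((\<lambda>n. Wd (take n L)) ` {..length L})"
  proof (rule Sum_any.expand_superset)
    show "{a. ?h a \<noteq> 0} \<subseteq> (\<lambda>n. Wd (take n L)) ` {..length L}"
    proof
      fix a assume "a \<in> {a. ?h a \<noteq> 0}"
      hence "take (length (letters a)) L = letters a" by (auto split: if_splits)
      hence "a = Wd (take (length (letters a)) L)" "length (letters a) \<le> length L"
        by (metis word.collapse, metis length_take min.bounded_iff order_refl)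
      thus "a \<in> (\<lambda>n. Wd (take n L)) ` {..length L}" by auto
    qed
  qed simp
  also have "\<dots> = sum (?h \<circ> (\<lambda>n. Wd (take n L))) {..length L}"
  proof (rule sum.reindex)
    show "inj_on (\<lambda>n. Wd (take n L)) {..length L}"
      by (rule inj_onI) (metis atMost_iff length_take min.absorb2 word.inject)
  qed
  also have "\<dots> = (\<Sum>n\<le>length L. ?f (Wd (take n L)) * ?g (Wd (drop n L)))"
    by (rule sum.cong) (auto simp: min_def)
  finally show ?thesis .
qed

lemma fa_of_mult: "fa_of (p * q) = fa_mul (fa_of p) (fa_of q)"
  by (simp add: fa_of_def fa_mul_def lookup_mult_word)

lemma fa_of_add: "fa_of (p + q) = fa_add (fa_of p) (fa_of q)"
  by (simp add: fa_of_def fa_add_def lookup_add)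

lemma fa_of_diff: "fa_of (p - q) = fa_sub (fa_of p) (fa_of q)"
  by (simp add: fa_of_def fa_sub_def lookup_minus)

lemma fa_of_zero: "fa_of 0 = fa_zero"
  by (simp add: fa_of_def fa_zero_def)

lemma fa_of_one: "fa_of 1 = fa_one"
  by (auto simp: fa_of_def fa_one_def lookup_one zero_Wd)

definition scal_pm :: "'k \<Rightarrow> 'k::ring_1 fpm" where "scal_pm c = Poly_Mapping.single 0 c"

lemma fa_of_smul: "fa_of (scal_pm c * p) = fa_smul c (fa_of p)"
proof -
  have "(\<Sum>n\<le>length l. (if n = 0 \<or> l = [] then c else 0) * Poly_Mapping.lookup p (Wd (drop n l)))
      = c * Poly_Mapping.lookup p (Wd l)" for l
  proof (cases l)
    case Nil thus ?thesis by simp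
  next
    case (Cons b m)
    thus ?thesis by (simp add: sum.atMost_Suc_shift del: sum.atMost_Suc)
  qed
  thus ?thesis
    by (simp add: scal_pm_def fa_of_def fa_smul_def lookup_mult_word lookup_single zero_Wd when_def)
qed

lemma scal_pm_comm: "scal_pm (c::'k::comm_ring_1) * p = p * scal_pm c"
proof (rule poly_mapping_eqI)
  fix k :: word
  obtain L where k: "k = Wd L" by (cases k)
  have a: "(\<Sum>n\<le>length L. Poly_Mapping.lookup (scal_pm c) (Wd (take n L)) * Poly_Mapping.lookup p (Wd (drop n L)))
      = c * Poly_Mapping.lookup p (Wd L)"
  proof (cases L)
    case Nil thus ?thesis by (simp add: scal_pm_def lookup_single zero_Wd)
  next
    case (Cons b m)
    thus ?thesis by (simp add: sum.atMost_Suc_shift scal_pm_def lookup_single zero_Wd when_def del: sum.atMost_Suc)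
  qed
  have b: "(\<Sum>n\<le>length L. Poly_Mapping.lookup p (Wd (take n L)) * Poly_Mapping.lookup (scal_pm c) (Wd (drop n L)))
      = Poly_Mapping.lookup p (Wd L) * c"
  proof -
    have "(\<Sum>n\<le>length L. Poly_Mapping.lookup p (Wd (take n L)) * Poly_Mapping.lookup (scal_pm c) (Wd (drop n L)))
       = (\<Sum>n\<in>{length L}. Poly_Mapping.lookup p (Wd (take n L)) * Poly_Mapping.lookup (scal_pm c) (Wd (drop n L)))"
      by (rule sum.mono_neutral_right) (auto simp: scal_pm_def lookup_single zero_Wd when_def)
    thus ?thesis by (simp add: scal_pm_def lookup_single zero_Wd)
  qed
  show "Poly_Mapping.lookup (scal_pm c * p) k = Poly_Mapping.lookup (p * scal_pm c) k"
    unfolding k lookup_mult_word a b by (simp add: mult.commute)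
qed

lemma scal_pm_add: "scal_pm (a + b) = scal_pm a + scal_pm b" by (simp add: scal_pm_def single_add)
lemma scal_pm_mult: "scal_pm (a * b) = scal_pm a * scal_pm b" by (simp add: scal_pm_def mult_single)
lemma scal_pm_zero: "scal_pm 0 = 0" by (simp add: scal_pm_def)
lemma scal_pm_one: "scal_pm 1 = 1" by (simp add: scal_pm_def)
lemma scal_pm_of_nat: "scal_pm (of_nat n) = of_nat n"
  by (induction n) (simp_all add: scal_pm_zero scal_pm_one scal_pm_add)

section \<open>Linear operators on functions \<nat> \<times> \<nat> \<Rightarrow> k\<close>

definition linear_action :: "((nat \<times> nat \<Rightarrow> 'k::comm_ring_1) \<Rightarrow> nat \<times> nat \<Rightarrow> 'k) \<Rightarrow> bool" where
  "linear_action T \<longleftrightarrow> (\<forall>u v. T (\<lambda>z. u z + v z) = (\<lambda>z. T u z + T v z)) \<and>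
     (\<forall>c u. T (\<lambda>z. c * u z) = (\<lambda>z. c * T u z))"

typedef (overloaded) 'k::comm_ring_1 lin_op = "{T :: (nat \<times> nat \<Rightarrow> 'k) \<Rightarrow> (nat \<times> nat \<Rightarrow> 'k). linear_action T}"
  morphisms app Op
  by (rule exI[of _ id]) (simp add: linear_action_def)

setup_lifting type_definition_lin_op

lemma linear_action_app: "linear_action (app T)" using app by simp

lemma app_smul: "app T (\<lambda>z. c * u z) = (\<lambda>z. c * app T u z)"
  using linear_action_app[of T] by (simp add: linear_action_def)

instantiation lin_op :: (comm_ring_1) ring_1
begin
lift_definition zero_lin_op :: "'a lin_op" is "\<lambda>v z. 0" by (simp add: linear_action_def)
lift_definition one_lin_op :: "'a lin_op" is "\<lambda>v. v" by (simp add: linear_action_def)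
lift_definition plus_lin_op :: "'a lin_op \<Rightarrow> 'a lin_op \<Rightarrow> 'a lin_op" is "\<lambda>S T v z. S v z + T v z"
  by (simp add: linear_action_def algebra_simps)
lift_definition uminus_lin_op :: "'a lin_op \<Rightarrow> 'a lin_op" is "\<lambda>S v z. - S v z"
  by (simp add: linear_action_def algebra_simps)
lift_definition minus_lin_op :: "'a lin_op \<Rightarrow> 'a lin_op \<Rightarrow> 'a lin_op" is "\<lambda>S T v z. S v z - T v z"
  by (simp add: linear_action_def algebra_simps)
lift_definition times_lin_op :: "'a lin_op \<Rightarrow> 'a lin_op \<Rightarrow> 'a lin_op" is "\<lambda>S T v. S (T v)"
  by (simp add: linear_action_def)
instance
proof
  fix a b c :: "'a lin_op"
  show "a * b * c = a * (b * c)" by transfer simp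
  show "1 * a = a" by transfer simp
  show "a * 1 = a" by transfer simp
  show "a + b + c = a + (b + c)" by transfer (simp add: add.assoc)
  show "a + b = b + a" by transfer (simp add: add.commute)
  show "0 + a = a" by transfer simp
  show "- a + a = 0" by transfer simp
  show "a - b = a + - b" by transfer simp
  show "(a + b) * c = a * c + b * c" by transfer simp
  show "a * (b + c) = a * b + a * c" by transfer (simp add: linear_action_def)
  show "(0::'a lin_op) \<noteq> 1"
  proof
    assume "(0::'a lin_op) = 1"
    hence "app (0::'a lin_op) (\<lambda>z. 1) (0,0) = app 1 (\<lambda>z. 1) (0,0)" by simp
    thus False by (simp add: zero_lin_op.rep_eq one_lin_op.rep_eq)
  qed
qed
end

lemma app_times: "app (S * T) v = app S (app T v)" by transfer simp
lemma app_plus: "app (S + T) v = (\<lambda>z. app S v z + app T v z)" by transfer simp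
lemma app_minus: "app (S - T) v = (\<lambda>z. app S v z - app T v z)" by transfer simp
lemma app_one: "app 1 v = v" by transfer simp
lemma app_zero_lin_op: "app 0 v = (\<lambda>z. 0)" by transfer simp
lemma app_uminus: "app (- S) v = (\<lambda>z. - app S v z)" by transfer simp

lemma lin_op_eqI: "(\<And>v. app S v = app T v) \<Longrightarrow> S = T"
  by transfer auto

lift_definition scal_op :: "'k \<Rightarrow> 'k::comm_ring_1 lin_op" is "\<lambda>c v z. c * v z"
  by (simp add: linear_action_def algebra_simps)

lemma app_scal_op: "app (scal_op c) v = (\<lambda>z. c * v z)" by transfer simp

lemma scal_op_comm: "scal_op c * T = T * scal_op c"
  by (rule lin_op_eqI) (simp add: app_times app_scal_op app_smul)
lemma scal_op_add: "scal_op (a + b) = scal_op a + scal_op b"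
  by (rule lin_op_eqI) (simp add: app_plus app_scal_op algebra_simps)
lemma scal_op_mult: "scal_op (a * b) = scal_op a * scal_op b"
  by (rule lin_op_eqI) (simp add: app_times app_scal_op algebra_simps)
lemma scal_op_one: "scal_op 1 = 1"
  by (rule lin_op_eqI) (simp add: app_one app_scal_op)
lemma scal_op_zero: "scal_op 0 = 0"
  by (rule lin_op_eqI) (simp add: app_zero_lin_op app_scal_op)
lemma scal_op_neg: "scal_op (- a) = - scal_op a"
  by (rule lin_op_eqI) (simp add: app_uminus app_scal_op algebra_simps)
lemma scal_op_of_nat: "scal_op (of_nat n) = of_nat n"
  by (induction n) (simp_all add: scal_op_zero scal_op_one scal_op_add)

lemma app_sum: "app (sum f A) v = (\<lambda>z. \<Sum>a\<in>A. app (f a) v z)"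
  by (induction A rule: infinite_finite_induct) (simp_all add: app_zero_lin_op app_plus)

definition x_pm :: "'k::comm_ring_1 fpm" where "x_pm = Poly_Mapping.single (Wd [False]) 1"
definition y_pm :: "'k::comm_ring_1 fpm" where "y_pm = Poly_Mapping.single (Wd [True]) 1"

lemma fa_of_x_pm: "fa_of x_pm = fa_x"
  by (auto simp: fa_of_def x_pm_def fa_x_def lookup_single when_def)
lemma fa_of_y_pm: "fa_of y_pm = fa_y"
  by (auto simp: fa_of_def y_pm_def fa_y_def lookup_single when_def)
lemma fa_x_carrier: "(fa_x :: 'k::comm_ring_1 fa) \<in> fa_carrier"
  using fa_of_carrier[of x_pm] by (simp add: fa_of_x_pm)
lemma fa_y_carrier: "(fa_y :: 'k::comm_ring_1 fa) \<in> fa_carrier"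
  using fa_of_carrier[of y_pm] by (simp add: fa_of_y_pm)
lemma pm_of_fa_x: "pm_of (fa_x :: 'k::comm_ring_1 fa) = x_pm" by (metis fa_of_x_pm pm_of_fa_of)
lemma pm_of_fa_y: "pm_of (fa_y :: 'k::comm_ring_1 fa) = y_pm" by (metis fa_of_y_pm pm_of_fa_of)

lemma fa_of_power: "fa_of (p ^ n) = fa_pow (fa_of p) n"
  by (induction n) (simp_all add: fa_pow_def fa_of_one fa_of_mult)

definition relator_pm :: "nat \<Rightarrow> 'k::comm_ring_1 fpm" where
  "relator_pm N = y_pm * x_pm - x_pm * y_pm - x_pm ^ N"

lemma fa_of_relator_pm: "fa_of (relator_pm N) = relator N"
  by (simp add: relator_pm_def relator_def fa_of_diff fa_of_mult fa_of_x_pm fa_of_y_pm fa_of_power)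

lemma fa_carrier_mul: "(f::'k::comm_ring_1 fa) \<in> fa_carrier \<Longrightarrow> g \<in> fa_carrier \<Longrightarrow> fa_mul f g \<in> fa_carrier"
  using fa_of_carrier[of "pm_of f * pm_of g"] by (simp add: fa_of_mult)

lemma fa_carrier_add: "(f::'k::comm_ring_1 fa) \<in> fa_carrier \<Longrightarrow> g \<in> fa_carrier \<Longrightarrow> fa_add f g \<in> fa_carrier"
  using fa_of_carrier[of "pm_of f + pm_of g"] by (simp add: fa_of_add)

lemma fa_carrier_sub: "(f::'k::comm_ring_1 fa) \<in> fa_carrier \<Longrightarrow> g \<in> fa_carrier \<Longrightarrow> fa_sub f g \<in> fa_carrier"
  using fa_of_carrier[of "pm_of f - pm_of g"] by (simp add: fa_of_diff)

lemma fa_carrier_smul: "(f::'k::comm_ring_1 fa) \<in> fa_carrier \<Longrightarrow> fa_smul c f \<in> fa_carrier"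
  using fa_of_carrier[of "scal_pm c * pm_of f"] by (simp add: fa_of_smul)

lemma pm_of_mult: "(f::'k::comm_ring_1 fa) \<in> fa_carrier \<Longrightarrow> g \<in> fa_carrier \<Longrightarrow> pm_of (fa_mul f g) = pm_of f * pm_of g"
  by (rule fa_of_inj) (simp add: fa_carrier_mul fa_carrier_add fa_carrier_sub fa_carrier_smul fa_of_mult)

lemma pm_of_add: "(f::'k::comm_ring_1 fa) \<in> fa_carrier \<Longrightarrow> g \<in> fa_carrier \<Longrightarrow> pm_of (fa_add f g) = pm_of f + pm_of g"
  by (rule fa_of_inj) (simp add: fa_carrier_mul fa_carrier_add fa_carrier_sub fa_carrier_smul fa_of_add)

lemma pm_of_sub: "(f::'k::comm_ring_1 fa) \<in> fa_carrier \<Longrightarrow> g \<in> fa_carrier \<Longrightarrow> pm_of (fa_sub f g) = pm_of f - pm_of g"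
  by (rule fa_of_inj) (simp add: fa_carrier_mul fa_carrier_add fa_carrier_sub fa_carrier_smul fa_of_diff)

lemma pm_of_smul: "(f::'k::comm_ring_1 fa) \<in> fa_carrier \<Longrightarrow> pm_of (fa_smul c f) = scal_pm c * pm_of f"
  by (rule fa_of_inj) (simp add: fa_carrier_mul fa_carrier_add fa_carrier_sub fa_carrier_smul fa_of_smul)

lemma rel_ideal_carrier: "f \<in> rel_ideal N \<Longrightarrow> (f::'k::comm_ring_1 fa) \<in> fa_carrier"
proof (induction rule: rel_ideal.induct)
  case gen show ?case by (metis fa_of_relator_pm fa_of_carrier)
next
  case zero show ?case by (metis fa_of_zero fa_of_carrier)
qed (auto simp: fa_carrier_mul fa_carrier_add)

definition ideal_pm :: "nat \<Rightarrow> 'k::comm_ring_1 fpm set" where "ideal_pm N = {p. fa_of p \<in> rel_ideal N}"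

lemma ideal_pm_rel: "relator_pm N \<in> ideal_pm N" by (simp add: ideal_pm_def fa_of_relator_pm rel_ideal.gen)
lemma ideal_pm_zero: "0 \<in> ideal_pm N" by (simp add: ideal_pm_def fa_of_zero rel_ideal.zero)
lemma ideal_pm_add: "p \<in> ideal_pm N \<Longrightarrow> q \<in> ideal_pm N \<Longrightarrow> p + q \<in> ideal_pm N"
  by (simp add: ideal_pm_def fa_of_add rel_ideal.add)
lemma ideal_pm_multL: "p \<in> ideal_pm N \<Longrightarrow> u * p \<in> ideal_pm N"
  by (simp add: ideal_pm_def fa_of_mult rel_ideal.mult_left)
lemma ideal_pm_multR: "p \<in> ideal_pm N \<Longrightarrow> p * u \<in> ideal_pm N"
  by (simp add: ideal_pm_def fa_of_mult rel_ideal.mult_right)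
lemma ideal_pm_sum: "(\<And>a. a \<in> A \<Longrightarrow> f a \<in> ideal_pm N) \<Longrightarrow> sum f A \<in> ideal_pm N"
  by (induction A rule: infinite_finite_induct) (auto intro: ideal_pm_add ideal_pm_zero)

lemma eqA_iff_ideal_pm: "f \<in> fa_carrier \<Longrightarrow> g \<in> fa_carrier \<Longrightarrow> eqA N f g \<longleftrightarrow> pm_of f - pm_of g \<in> ideal_pm N"
  by (simp add: eqA_def ideal_pm_def fa_of_diff)

section \<open>A faithful representation of A\<close>

definition shift_x :: "(nat \<times> nat \<Rightarrow> 'k::comm_ring_1) \<Rightarrow> nat \<times> nat \<Rightarrow> 'k" where
  "shift_x v = (\<lambda>(a,b). if a = 0 then 0 else v (a - 1, b))"
text \<open>y (x^a y^b) = x^a y^(b+1) + a x^(a+N-1) y^b.\<close>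
definition act_y :: "nat \<Rightarrow> (nat \<times> nat \<Rightarrow> 'k::comm_ring_1) \<Rightarrow> nat \<times> nat \<Rightarrow> 'k" where
  "act_y N v = (\<lambda>(a,b). (if b = 0 then 0 else v (a, b - 1)) +
      (if N - 1 \<le> a then of_nat (a - (N - 1)) * v (a - (N - 1), b) else 0))"

lemma linear_action_shift_x: "linear_action shift_x"
  by (auto simp: linear_action_def shift_x_def fun_eq_iff)
lemma linear_action_act_y: "linear_action (act_y N)"
  by (auto simp: linear_action_def act_y_def fun_eq_iff algebra_simps)

definition X_op :: "'k::comm_ring_1 lin_op" where "X_op = Op shift_x"
definition Y_op :: "nat \<Rightarrow> 'k::comm_ring_1 lin_op" where "Y_op N = Op (act_y N)"

lemma app_X_op: "app X_op = shift_x" by (simp add: X_op_def Op_inverse linear_action_shift_x)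
lemma app_Y_op: "app (Y_op N) = act_y N" by (simp add: Y_op_def Op_inverse linear_action_act_y)

lemma app_X_op_pow: "app (X_op ^ n) v = (\<lambda>(a,b). if n \<le> a then v (a - n, b) else 0)"
proof (induction n arbitrary: v)
  case 0 thus ?case by (simp add: app_one)
next
  case (Suc n)
  show ?case
    by (auto simp: app_times app_X_op Suc shift_x_def fun_eq_iff)
qed

lemma Y_X_relation: "N \<ge> 1 \<Longrightarrow> Y_op N * X_op - X_op * Y_op N = (X_op ^ N :: 'k::comm_ring_1 lin_op)"
proof (rule lin_op_eqI)
  fix v :: "nat \<times> nat \<Rightarrow> 'k"
  assume N: "N \<ge> 1"
  show "app (Y_op N * X_op - X_op * Y_op N) v = app (X_op ^ N) v"
  proof
    fix z :: "nat \<times> nat"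
    obtain a b where z: "z = (a,b)" by (cases z)
    have L: "app (Y_op N * X_op - X_op * Y_op N) v z =
       ((if b = 0 then 0 else shift_x v (a, b - 1)) +
         (if N - 1 \<le> a then of_nat (a - (N - 1)) * shift_x v (a - (N - 1), b) else 0))
      - (if a = 0 then 0 else act_y N v (a - 1, b))"
      by (simp add: z app_minus app_times app_X_op app_Y_op act_y_def shift_x_def)
    show "app (Y_op N * X_op - X_op * Y_op N) v z = app (X_op ^ N) v z"
    proof (cases "N \<le> a")
      case True
      obtain m where a: "a = N + m" using le_Suc_ex[OF True] by blast
      obtain K where K: "N = Suc K" using N by (cases N) auto
      have R: "app (X_op ^ N) v z = v (m, b)" using True by (simp add: z app_X_op_pow a)
      show ?thesis unfolding L R
        by (simp add: shift_x_def act_y_def a K algebra_simps)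
    next
      case False
      have R: "app (X_op ^ N) v z = 0" using False by (simp add: z app_X_op_pow)
      have e: "\<not> (N - 1 \<le> a - 1) \<or> a = 0" using False N by auto
      show ?thesis
      proof (cases "N - 1 \<le> a")
        case True
        hence "a - (N - 1) = 0" using False by auto
        thus ?thesis using e unfolding L R by (auto simp: shift_x_def act_y_def)
      next
        case False
        thus ?thesis using e unfolding L R by (auto simp: shift_x_def act_y_def)
      qed
    qed
  qed
qed

fun word_op :: "nat \<Rightarrow> bool list \<Rightarrow> 'k::comm_ring_1 lin_op" where
  "word_op N [] = 1"
| "word_op N (b # l) = (if b then Y_op N else X_op) * word_op N l"

lemma word_op_append: "word_op N (l1 @ l2) = word_op N l1 * word_op N l2"
  by (induction l1) (simp_all add: mult.assoc)

definition rep :: "nat \<Rightarrow> 'k::comm_ring_1 fpm \<Rightarrow> 'k lin_op" where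
  "rep N p = (\<Sum>w\<in>Poly_Mapping.keys p. scal_op (Poly_Mapping.lookup p w) * word_op N (letters w))"

lemma rep_superset:
  assumes "finite S" "Poly_Mapping.keys p \<subseteq> S"
  shows "rep N p = (\<Sum>w\<in>S. scal_op (Poly_Mapping.lookup p w) * word_op N (letters w))"
  unfolding rep_def
  by (rule sum.mono_neutral_left[OF assms(1) assms(2)]) (simp add: in_keys_iff scal_op_zero)

lemma rep_add: "rep N (p + q) = rep N p + rep N q"
proof -
  let ?S = "Poly_Mapping.keys p \<union> Poly_Mapping.keys q"
  have "rep N (p + q) = (\<Sum>w\<in>?S. scal_op (Poly_Mapping.lookup (p+q) w) * word_op N (letters w))"
    by (rule rep_superset) (simp_all add: keys_add[of p q])
  also have "\<dots> = (\<Sum>w\<in>?S. scal_op (Poly_Mapping.lookup p w) * word_op N (letters w)) +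
                  (\<Sum>w\<in>?S. scal_op (Poly_Mapping.lookup q w) * word_op N (letters w))"
    by (simp add: lookup_add scal_op_add distrib_right sum.distrib)
  also have "\<dots> = rep N p + rep N q"
    by (simp add: rep_superset[symmetric])
  finally show ?thesis .
qed

lemma rep_zero: "rep N 0 = 0" by (simp add: rep_def)

lemma rep_sum: "rep N (sum f A) = (\<Sum>a\<in>A. rep N (f a))"
  by (induction A rule: infinite_finite_induct) (simp_all add: rep_zero rep_add)

lemma rep_single: "rep N (Poly_Mapping.single w c) = scal_op c * word_op N (letters w)"
proof -
  have "rep N (Poly_Mapping.single w c) = (\<Sum>w'\<in>{w}. scal_op (Poly_Mapping.lookup (Poly_Mapping.single w c) w') * word_op N (letters w'))"
    by (rule rep_superset) auto
  thus ?thesis by simp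
qed

lemma poly_mapping_sum_single: "p = (\<Sum>a\<in>Poly_Mapping.keys p. Poly_Mapping.single a (Poly_Mapping.lookup p a))"
proof (rule poly_mapping_eqI)
  fix k
  show "Poly_Mapping.lookup p k = Poly_Mapping.lookup (\<Sum>a\<in>Poly_Mapping.keys p. Poly_Mapping.single a (Poly_Mapping.lookup p a)) k"
  proof (cases "k \<in> Poly_Mapping.keys p")
    case True
    thus ?thesis by (simp add: lookup_sum lookup_single when_def sum.delta)
  next
    case False
    thus ?thesis by (simp add: lookup_sum lookup_single when_def in_keys_iff)
  qed
qed

lemma rep_mult: "rep N (p * q) = rep N p * rep N q"
proof -
  let ?sp = "\<lambda>a. Poly_Mapping.single a (Poly_Mapping.lookup p a)"
  let ?sq = "\<lambda>b. Poly_Mapping.single b (Poly_Mapping.lookup q b)"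
  have "p * q = (\<Sum>a\<in>Poly_Mapping.keys p. ?sp a) * (\<Sum>b\<in>Poly_Mapping.keys q. ?sq b)"
    by (simp flip: poly_mapping_sum_single)
  also have "\<dots> = (\<Sum>a\<in>Poly_Mapping.keys p. \<Sum>b\<in>Poly_Mapping.keys q. ?sp a * ?sq b)"
    by (simp only: sum_distrib_left sum_distrib_right) (rule sum.swap)
  finally have 1: "rep N (p * q) = (\<Sum>a\<in>Poly_Mapping.keys p. \<Sum>b\<in>Poly_Mapping.keys q. rep N (?sp a * ?sq b))"
    by (simp add: rep_sum)
  have 2: "rep N (?sp a * ?sq b) = rep N (?sp a) * rep N (?sq b)" for a b
  proof -
    have "rep N (?sp a * ?sq b) = scal_op (Poly_Mapping.lookup p a * Poly_Mapping.lookup q b) * word_op N (letters a @ letters b)"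
      by (simp add: mult_single rep_single plus_word_def)
    also have "\<dots> = (scal_op (Poly_Mapping.lookup p a) * word_op N (letters a)) * (scal_op (Poly_Mapping.lookup q b) * word_op N (letters b))"
      by (simp add: scal_op_mult word_op_append mult.assoc) (metis scal_op_comm mult.assoc)
    finally show ?thesis by (simp add: rep_single)
  qed
  have "rep N p * rep N q = rep N (\<Sum>a\<in>Poly_Mapping.keys p. ?sp a) * rep N (\<Sum>b\<in>Poly_Mapping.keys q. ?sq b)"
    by (simp flip: poly_mapping_sum_single)
  also have "\<dots> = (\<Sum>a\<in>Poly_Mapping.keys p. \<Sum>b\<in>Poly_Mapping.keys q. rep N (?sp a) * rep N (?sq b))"
    by (simp only: rep_sum sum_distrib_left sum_distrib_right) (rule sum.swap)
  finally show ?thesis using 1 2 by simp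
qed

lemma rep_one: "rep N 1 = (1 :: 'k::comm_ring_1 lin_op)"
proof -
  have e: "(1::'k fpm) = Poly_Mapping.single 0 1" by (simp add: poly_mapping_eqI lookup_one lookup_single)
  show ?thesis by (subst e) (simp add: rep_single zero_Wd scal_op_one del: single_one)
qed

lemma rep_scal_pm: "rep N (scal_pm c) = scal_op c" by (simp add: scal_pm_def rep_single zero_Wd)
lemma rep_x_pm: "rep N x_pm = X_op" by (simp add: x_pm_def rep_single scal_op_one)
lemma rep_y_pm: "rep N y_pm = Y_op N" by (simp add: y_pm_def rep_single scal_op_one)
lemma rep_power: "rep N (p ^ n) = rep N p ^ n"
  by (induction n) (simp_all add: rep_one rep_mult)
lemma rep_neg: "rep N (- p) = - rep N p"
  by (metis add_eq_0_iff2 rep_add rep_zero)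
lemma rep_diff: "rep N (p - q) = rep N p - rep N q"
  by (metis diff_conv_add_uminus rep_add rep_neg)

lemma rep_relator_pm: "N \<ge> 1 \<Longrightarrow> rep N (relator_pm N :: 'k::comm_ring_1 fpm) = 0"
  by (simp add: relator_pm_def rep_diff rep_mult rep_x_pm rep_y_pm rep_power Y_X_relation)

lemma rep_rel_ideal: assumes N: "N \<ge> 1"
  shows "f \<in> rel_ideal N \<Longrightarrow> rep N (pm_of (f :: 'k::comm_ring_1 fa)) = 0"
proof (induction rule: rel_ideal.induct)
  case gen thus ?case by (metis fa_of_relator_pm rep_relator_pm pm_of_fa_of N)
next
  case zero thus ?case by (metis fa_of_zero rep_zero pm_of_fa_of)
next
  case (add f g) thus ?case by (simp add: pm_of_add rel_ideal_carrier rep_add)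
next
  case (mult_left f u) thus ?case by (simp add: pm_of_mult rel_ideal_carrier rep_mult)
next
  case (mult_right f u) thus ?case by (simp add: pm_of_mult rel_ideal_carrier rep_mult)
qed

lemma rep_ideal_pm: "N \<ge> 1 \<Longrightarrow> p \<in> ideal_pm N \<Longrightarrow> rep N p = 0"
  using rep_rel_ideal[of N "fa_of p"] by (simp add: ideal_pm_def)

section \<open>Reduction to the monomials x^a y^b\<close>

lemma commutator_power_step:
  fixes x y :: "'a::ring_1"
  shows "(y * x ^ e - x ^ e * y - of_nat e * x ^ (e + K)) * x + x ^ e * (y * x - x * y - x ^ Suc K)
     = y * x ^ Suc e - x ^ Suc e * y - of_nat (Suc e) * x ^ (Suc e + K)"
proof -
  have h1: "y * x ^ e * x = y * x ^ Suc e" by (simp only: power_Suc2 mult.assoc)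
  have h2: "x ^ e * x * y = x ^ Suc e * y" by (simp only: power_Suc2)
  have h3: "x ^ (e + K) * x = x ^ (Suc e + K)" by (metis add_Suc power_Suc2)
  have h4: "x ^ e * x ^ Suc K = x ^ (Suc e + K)" by (simp only: power_add[symmetric] add_Suc add_Suc_right)
  have "(y * x ^ e - x ^ e * y - of_nat e * x ^ (e + K)) * x + x ^ e * (y * x - x * y - x ^ Suc K)
     = y * x ^ e * x - x ^ e * y * x - of_nat e * (x ^ (e + K) * x) + (x ^ e * y * x - x ^ e * x * y - x ^ e * x ^ Suc K)"
    by (simp add: algebra_simps)
  also have "\<dots> = y * x ^ Suc e - x ^ e * y * x - of_nat e * x ^ (Suc e + K) + (x ^ e * y * x - x ^ Suc e * y - x ^ (Suc e + K))"
    by (simp only: h1 h2 h3 h4)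
  also have "\<dots> = y * x ^ Suc e - x ^ Suc e * y - of_nat (Suc e) * x ^ (Suc e + K)"
    by (simp add: algebra_simps of_nat_Suc)
  finally show ?thesis .
qed

lemma commutator_power:
  fixes x y :: "'a::ring_1"
  assumes r: "y * x - x * y = x ^ Suc K"
  shows "y * x ^ e - x ^ e * y = of_nat e * x ^ (e + K)"
proof (induction e)
  case 0 thus ?case by simp
next
  case (Suc e)
  have "(y * x ^ e - x ^ e * y - of_nat e * x ^ (e + K)) * x + x ^ e * (y * x - x * y - x ^ Suc K)
     = y * x ^ Suc e - x ^ Suc e * y - of_nat (Suc e) * x ^ (Suc e + K)"
    by (rule commutator_power_step)
  thus ?case using Suc r by simp
qed

lemma y_x_pow_commutator_in_ideal:
  assumes N: "N \<ge> 1"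
  shows "y_pm * x_pm ^ e - x_pm ^ e * y_pm - of_nat e * x_pm ^ (e + (N - 1)) \<in> ideal_pm N"
proof (induction e)
  case 0 thus ?case by (simp add: ideal_pm_zero)
next
  case (Suc e)
  obtain K where K: "N = Suc K" using N by (cases N) auto
  let ?r = "y_pm * x_pm ^ e - x_pm ^ e * y_pm - of_nat e * x_pm ^ (e + (N - 1))"
  have "y_pm * x_pm ^ Suc e - x_pm ^ Suc e * y_pm - of_nat (Suc e) * x_pm ^ (Suc e + (N - 1))
      = ?r * x_pm + x_pm ^ e * relator_pm N"
    unfolding relator_pm_def K diff_Suc_1 by (rule commutator_power_step[symmetric])
  thus ?case using Suc ideal_pm_multR ideal_pm_multL ideal_pm_rel ideal_pm_add by metis
qed

definition mono_pm :: "nat \<times> nat \<Rightarrow> 'k::comm_ring_1 fpm" where "mono_pm z = x_pm ^ fst z * y_pm ^ snd z"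

definition mono_span :: "'k::comm_ring_1 fpm set" where
  "mono_span = {s. \<exists>S c. finite S \<and> (\<forall>z. z \<notin> S \<longrightarrow> c z = 0) \<and> s = (\<Sum>z\<in>S. scal_pm (c z) * mono_pm z)}"

lemma mono_span_superset:
  assumes "finite S" "\<forall>z. z \<notin> S \<longrightarrow> c z = 0" "S \<subseteq> S'" "finite S'"
  shows "(\<Sum>z\<in>S. scal_pm (c z) * mono_pm z) = (\<Sum>z\<in>S'. scal_pm (c z) * (mono_pm z :: 'k::comm_ring_1 fpm))"
  by (rule sum.mono_neutral_left) (use assms in \<open>auto simp: scal_pm_zero\<close>)

lemma mono_span_mono_pm: "mono_pm z \<in> mono_span"
  unfolding mono_span_def mem_Collect_eq
  by (rule exI[of _ "{z}"], rule exI[of _ "\<lambda>z'. if z' = z then 1 else 0"]) (simp add: scal_pm_one)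

lemma mono_span_zero: "0 \<in> mono_span"
  unfolding mono_span_def mem_Collect_eq by (rule exI[of _ "{}"], rule exI[of _ "\<lambda>z. 0"]) simp

lemma mono_span_add: assumes "a \<in> mono_span" "b \<in> mono_span" shows "a + b \<in> mono_span"
proof -
  obtain Sa ca where A: "finite Sa" "\<forall>z. z \<notin> Sa \<longrightarrow> ca z = 0" "a = (\<Sum>z\<in>Sa. scal_pm (ca z) * mono_pm z)"
    using assms(1) unfolding mono_span_def by blast
  obtain Sb cb where B: "finite Sb" "\<forall>z. z \<notin> Sb \<longrightarrow> cb z = 0" "b = (\<Sum>z\<in>Sb. scal_pm (cb z) * mono_pm z)"
    using assms(2) unfolding mono_span_def by blast
  have "a = (\<Sum>z\<in>Sa \<union> Sb. scal_pm (ca z) * mono_pm z)" using A B by (simp add: mono_span_superset)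
  moreover have "b = (\<Sum>z\<in>Sa \<union> Sb. scal_pm (cb z) * mono_pm z)" using A B by (simp add: mono_span_superset)
  ultimately have "a + b = (\<Sum>z\<in>Sa \<union> Sb. scal_pm (ca z + cb z) * mono_pm z)"
    by (simp add: scal_pm_add distrib_right sum.distrib)
  thus ?thesis unfolding mono_span_def using A B
    by (intro CollectI exI[of _ "Sa \<union> Sb"] exI[of _ "\<lambda>z. ca z + cb z"]) auto
qed

lemma mono_span_smul: assumes "a \<in> mono_span" shows "scal_pm k * a \<in> mono_span"
proof -
  obtain Sa ca where A: "finite Sa" "\<forall>z. z \<notin> Sa \<longrightarrow> ca z = 0" "a = (\<Sum>z\<in>Sa. scal_pm (ca z) * mono_pm z)"
    using assms(1) unfolding mono_span_def by blast
  have "scal_pm k * a = (\<Sum>z\<in>Sa. scal_pm (k * ca z) * mono_pm z)"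
    by (simp add: A sum_distrib_left scal_pm_mult mult.assoc)
  thus ?thesis unfolding mono_span_def using A
    by (intro CollectI exI[of _ Sa] exI[of _ "\<lambda>z. k * ca z"]) auto
qed

lemma mono_span_sum: "(\<And>a. a \<in> A \<Longrightarrow> f a \<in> mono_span) \<Longrightarrow> sum f A \<in> mono_span"
  by (induction A rule: infinite_finite_induct) (auto intro: mono_span_add mono_span_zero)

lemma mono_span_form: "s \<in> mono_span \<Longrightarrow> \<exists>S c. finite S \<and> (\<forall>z. z \<notin> S \<longrightarrow> c z = 0) \<and> s = (\<Sum>z\<in>S. scal_pm (c z) * mono_pm z)"
  unfolding mono_span_def by blast

lemma mono_span_x_pm: assumes "s \<in> mono_span" shows "x_pm * s \<in> mono_span"
proof -
  obtain S c where A: "finite S" "s = (\<Sum>z\<in>S. scal_pm (c z) * mono_pm z)"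
    using mono_span_form[OF assms] by blast
  have "x_pm * s = (\<Sum>z\<in>S. scal_pm (c z) * mono_pm (Suc (fst z), snd z))"
    by (simp add: A sum_distrib_left mono_pm_def mult.assoc scal_pm_comm)
  thus ?thesis by (auto intro!: mono_span_sum mono_span_smul mono_span_mono_pm)
qed

lemma mono_span_y_pm: assumes N: "N \<ge> 1" and "s \<in> mono_span" shows "\<exists>s'\<in>mono_span. y_pm * s - s' \<in> ideal_pm N"
proof -
  obtain S c where A: "finite S" "s = (\<Sum>z\<in>S. scal_pm (c z) * mono_pm z)"
    using mono_span_form[OF assms(2)] by blast
  let ?t = "\<lambda>z. scal_pm (c z) * (mono_pm (fst z, Suc (snd z)) + of_nat (fst z) * mono_pm (fst z + (N - 1), snd z))"
  let ?s' = "\<Sum>z\<in>S. ?t z"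
  have tt: "?t z = scal_pm (c z) * mono_pm (fst z, Suc (snd z)) + scal_pm (c z * of_nat (fst z)) * mono_pm (fst z + (N - 1), snd z)" for z
    by (simp add: scal_pm_mult scal_pm_of_nat distrib_left mult.assoc)
  have "?s' \<in> mono_span"
    unfolding tt by (intro mono_span_sum mono_span_add mono_span_smul mono_span_mono_pm)
  moreover have "y_pm * s - ?s' = (\<Sum>z\<in>S. scal_pm (c z) * ((y_pm * x_pm ^ fst z - x_pm ^ fst z * y_pm
       - of_nat (fst z) * x_pm ^ (fst z + (N - 1))) * y_pm ^ snd z))"
  proof -
    have t: "y_pm * (scal_pm (c z) * mono_pm z) - ?t z = scal_pm (c z) * ((y_pm * x_pm ^ fst z - x_pm ^ fst z * y_pm
       - of_nat (fst z) * x_pm ^ (fst z + (N - 1))) * y_pm ^ snd z)" for z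
    proof -
      have "y_pm * (scal_pm (c z) * mono_pm z) = scal_pm (c z) * (y_pm * mono_pm z)" by (metis mult.assoc scal_pm_comm)
      thus ?thesis by (simp add: mono_pm_def algebra_simps)
    qed
    have "y_pm * s - ?s' = (\<Sum>z\<in>S. y_pm * (scal_pm (c z) * mono_pm z) - ?t z)"
      by (simp only: A sum_distrib_left sum_subtractf)
    also have "\<dots> = (\<Sum>z\<in>S. scal_pm (c z) * ((y_pm * x_pm ^ fst z - x_pm ^ fst z * y_pm
       - of_nat (fst z) * x_pm ^ (fst z + (N - 1))) * y_pm ^ snd z))"
      by (rule sum.cong[OF refl], rule t)
    finally show ?thesis .
  qed
  moreover have "\<dots> \<in> ideal_pm N"
    by (intro ideal_pm_sum ideal_pm_multL ideal_pm_multR y_x_pow_commutator_in_ideal N)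
  ultimately show ?thesis by (intro bexI[of _ "?s'"]) simp_all
qed

lemma single_reduces_to_mono_span:
  assumes N: "N \<ge> 1"
  shows "\<exists>s\<in>mono_span. Poly_Mapping.single (Wd l) k - s \<in> ideal_pm N"
proof (induction l)
  case Nil
  have "Poly_Mapping.single (Wd []) k = scal_pm k * mono_pm (0,0)" by (simp add: scal_pm_def mono_pm_def zero_Wd)
  thus ?case using mono_span_smul[OF mono_span_mono_pm] ideal_pm_zero by (metis diff_self)
next
  case (Cons b l)
  then obtain s where s: "s \<in> mono_span" "Poly_Mapping.single (Wd l) k - s \<in> ideal_pm N"
    by blast
  have e: "Poly_Mapping.single (Wd (b # l)) k = (if b then y_pm else x_pm) * Poly_Mapping.single (Wd l) k"
    by (simp add: x_pm_def y_pm_def mult_single)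
  show ?case
  proof (cases b)
    case True
    obtain s' where s': "s' \<in> mono_span" "y_pm * s - s' \<in> ideal_pm N" using mono_span_y_pm[OF N s(1)] by blast
    have "y_pm * Poly_Mapping.single (Wd l) k - s' = y_pm * (Poly_Mapping.single (Wd l) k - s) + (y_pm * s - s')"
      by (simp add: algebra_simps)
    thus ?thesis unfolding e using True s s' by (metis ideal_pm_add ideal_pm_multL)
  next
    case False
    have "x_pm * Poly_Mapping.single (Wd l) k - x_pm * s = x_pm * (Poly_Mapping.single (Wd l) k - s)"
      by (simp add: algebra_simps)
    thus ?thesis unfolding e using False s mono_span_x_pm[OF s(1)] by (metis ideal_pm_multL)
  qed
qed

lemma reduces_to_mono_span:
  assumes N: "N \<ge> 1"
  shows "\<exists>s\<in>mono_span. p - s \<in> ideal_pm N"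
proof -
  let ?m = "\<lambda>a. Poly_Mapping.single a (Poly_Mapping.lookup p a)"
  have "\<exists>s\<in>mono_span. (\<Sum>a\<in>A. ?m a) - s \<in> ideal_pm N" if "finite A" for A
    using that
  proof (induction A rule: finite_induct)
    case empty thus ?case using mono_span_zero ideal_pm_zero by force
  next
    case (insert a A)
    obtain s1 where 1: "s1 \<in> mono_span" "?m a - s1 \<in> ideal_pm N"
      using single_reduces_to_mono_span[OF N, of "letters a"] by auto
    obtain s2 where 2: "s2 \<in> mono_span" "(\<Sum>a\<in>A. ?m a) - s2 \<in> ideal_pm N"
      using insert by blast
    have "(\<Sum>a\<in>insert a A. ?m a) - (s1 + s2) = (?m a - s1) + ((\<Sum>a\<in>A. ?m a) - s2)"
      using insert by (simp add: algebra_simps)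
    thus ?case using 1 2 mono_span_add ideal_pm_add by metis
  qed
  thus ?thesis by (metis finite_keys poly_mapping_sum_single)
qed

section \<open>Coefficients and faithfulness\<close>

definition delta :: "nat \<times> nat \<Rightarrow> nat \<times> nat \<Rightarrow> 'k::comm_ring_1" where
  "delta z = (\<lambda>z'. if z' = z then 1 else 0)"
text \<open>Applied to the indicator of (0,0), the operator \<Sum> c_(a,b) X^a Y^b returns (a,b) \<mapsto> c_(a,b).\<close>
definition nf :: "'k::comm_ring_1 lin_op \<Rightarrow> nat \<times> nat \<Rightarrow> 'k" where
  "nf T = app T (delta (0,0))"
definition mono_op :: "nat \<Rightarrow> nat \<times> nat \<Rightarrow> 'k::comm_ring_1 lin_op" where
  "mono_op N z = X_op ^ fst z * Y_op N ^ snd z"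

lemma app_Y_op_pow_delta: "app (Y_op N ^ d) (delta (0,0)) = (delta (0,d) :: nat \<times> nat \<Rightarrow> 'k::comm_ring_1)"
proof (induction d)
  case 0 thus ?case by (simp add: app_one)
next
  case (Suc d)
  show ?case
  proof
    fix z :: "nat \<times> nat"
    obtain a b where z: "z = (a,b)" by (cases z)
    show "app (Y_op N ^ Suc d) (delta (0,0)) z = (delta (0, Suc d) :: nat \<times> nat \<Rightarrow> 'k) z"
      by (simp add: app_times Suc app_Y_op) (cases b; auto simp: z act_y_def delta_def)
  qed
qed

lemma nf_mono_op: "nf (mono_op N z) = (delta z :: nat \<times> nat \<Rightarrow> 'k::comm_ring_1)"
proof
  fix z' :: "nat \<times> nat"
  obtain e d where z: "z = (e,d)" by (cases z)
  obtain a b where z': "z' = (a,b)" by (cases z')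
  show "nf (mono_op N z) z' = (delta z :: nat \<times> nat \<Rightarrow> 'k) z'"
    by (simp add: nf_def mono_op_def app_times app_Y_op_pow_delta app_X_op_pow) (auto simp: z z' delta_def)
qed

lemma rep_mono_pm: "rep N (mono_pm z) = mono_op N z"
  by (simp add: mono_pm_def mono_op_def rep_mult rep_power rep_x_pm rep_y_pm)

lemma nf_add: "nf (S + T) = (\<lambda>z. nf S z + nf T z)" by (simp add: nf_def app_plus)
lemma nf_diff: "nf (S - T) = (\<lambda>z. nf S z - nf T z)" by (simp add: nf_def app_minus)
lemma nf_zero: "nf 0 = (\<lambda>z. 0)" by (simp add: nf_def app_zero_lin_op)
lemma nf_scal_op: "nf (scal_op c * T) = (\<lambda>z. c * nf T z)" by (simp add: nf_def app_times app_scal_op)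
lemma nf_sum: "nf (sum f A) = (\<lambda>z. \<Sum>a\<in>A. nf (f a) z)" by (simp add: nf_def app_sum)
lemma nf_times: "nf (S * T) = app S (nf T)" by (simp add: nf_def app_times)

lemma nf_sum_mono_op:
  assumes "finite S" "\<forall>z. z \<notin> S \<longrightarrow> c z = 0"
  shows "nf (\<Sum>z\<in>S. scal_op (c z) * mono_op N z) = c"
proof
  fix z0
  have "nf (\<Sum>z\<in>S. scal_op (c z) * mono_op N z) z0 = (\<Sum>z\<in>S. c z * delta z z0)"
    by (simp add: nf_sum nf_scal_op nf_mono_op)
  also have "\<dots> = (\<Sum>z\<in>S. if z = z0 then c z else 0)"
    by (rule sum.cong) (auto simp: delta_def)
  also have "\<dots> = c z0" using assms(1) assms(2)[rule_format, of z0] by (simp add: sum.delta')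
  finally show "nf (\<Sum>z\<in>S. scal_op (c z) * mono_op N z) z0 = c z0" .
qed

lemma rep_mono_span_sum: "rep N (\<Sum>z\<in>S. scal_pm (c z) * mono_pm z) = (\<Sum>z\<in>S. scal_op (c z) * mono_op N z)"
  by (simp add: rep_sum rep_mult rep_scal_pm rep_mono_pm)

lemma rep_kernel: assumes N: "N \<ge> 1" and r: "rep N p = 0" shows "p \<in> ideal_pm N"
proof -
  obtain s where s: "s \<in> mono_span" "p - s \<in> ideal_pm N" using reduces_to_mono_span[OF N] by blast
  obtain S c where S: "finite S" "\<forall>z. z \<notin> S \<longrightarrow> c z = 0" "s = (\<Sum>z\<in>S. scal_pm (c z) * mono_pm z)"
    using mono_span_form[OF s(1)] by blast
  have "rep N s = rep N p - rep N (p - s)" by (simp add: rep_diff)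
  also have "\<dots> = 0" using r rep_ideal_pm[OF N s(2)] by simp
  finally have "c = (\<lambda>z. 0)" using nf_sum_mono_op[OF S(1) S(2), of N] rep_mono_span_sum[of N c S]
    by (simp add: S(3) nf_zero)
  hence "s = 0" using S(3) by (simp add: scal_pm_zero)
  thus ?thesis using s(2) by simp
qed

definition rep_alg :: "nat \<Rightarrow> 'k::comm_ring_1 lin_op set" where "rep_alg N = range (rep N)"

lemma rep_alg_expansion:
  assumes N: "N \<ge> 1" and T: "T \<in> rep_alg N"
  shows "\<exists>S. finite S \<and> (\<forall>z. z \<notin> S \<longrightarrow> nf T z = 0) \<and> T = (\<Sum>z\<in>S. scal_op (nf T z) * mono_op N z)"
proof -
  obtain p where p: "T = rep N p" using T by (auto simp: rep_alg_def)
  obtain s where s: "s \<in> mono_span" "p - s \<in> ideal_pm N" using reduces_to_mono_span[OF N] by blast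
  obtain S c where S: "finite S" "\<forall>z. z \<notin> S \<longrightarrow> c z = 0" "s = (\<Sum>z\<in>S. scal_pm (c z) * mono_pm z)"
    using mono_span_form[OF s(1)] by blast
  have "rep N p = rep N s + rep N (p - s)" by (simp add: rep_diff)
  hence T2: "T = (\<Sum>z\<in>S. scal_op (c z) * mono_op N z)" using rep_ideal_pm[OF N s(2)] p S(3) rep_mono_span_sum by simp
  hence "nf T = c" using nf_sum_mono_op[OF S(1) S(2)] by simp
  thus ?thesis using S T2 by auto
qed

lemma rep_alg_rep[simp]: "rep N p \<in> rep_alg N" by (simp add: rep_alg_def)
lemma rep_alg_add: "S \<in> rep_alg N \<Longrightarrow> T \<in> rep_alg N \<Longrightarrow> S + T \<in> rep_alg N"
  by (auto simp: rep_alg_def rep_add[symmetric])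
lemma rep_alg_mult: "S \<in> rep_alg N \<Longrightarrow> T \<in> rep_alg N \<Longrightarrow> S * T \<in> rep_alg N"
  by (auto simp: rep_alg_def rep_mult[symmetric])
lemma rep_alg_diff: "S \<in> rep_alg N \<Longrightarrow> T \<in> rep_alg N \<Longrightarrow> S - T \<in> rep_alg N"
  by (auto simp: rep_alg_def rep_diff[symmetric])
lemma rep_alg_scal_op: "scal_op c \<in> rep_alg N" using rep_alg_rep[of N "scal_pm c"] by (simp add: rep_scal_pm)
lemma rep_alg_zero: "0 \<in> rep_alg N" using rep_alg_rep[of N 0] by (simp add: rep_zero)
lemma rep_alg_one: "1 \<in> rep_alg N" using rep_alg_rep[of N 1] by (simp add: rep_one)
lemma rep_alg_X: "X_op \<in> rep_alg N" using rep_alg_rep[of N x_pm] by (simp add: rep_x_pm)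
lemma rep_alg_Y: "Y_op N \<in> rep_alg N" using rep_alg_rep[of N y_pm] by (simp add: rep_y_pm)
lemma rep_alg_pow: "T \<in> rep_alg N \<Longrightarrow> T ^ n \<in> rep_alg N"
  by (induction n) (simp_all add: rep_alg_one rep_alg_mult)
lemma rep_alg_mono_op: "mono_op N z \<in> rep_alg N" by (simp add: mono_op_def rep_alg_mult rep_alg_pow rep_alg_X rep_alg_Y)
lemma rep_alg_sum: "(\<And>a. a \<in> A \<Longrightarrow> f a \<in> rep_alg N) \<Longrightarrow> sum f A \<in> rep_alg N"
  by (induction A rule: infinite_finite_induct) (auto intro: rep_alg_add rep_alg_zero)

lemma rep_alg_eqI:
  assumes N: "N \<ge> 1" and "S \<in> rep_alg N" "T \<in> rep_alg N" "nf S = nf T"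
  shows "S = T"
proof -
  have D: "S - T \<in> rep_alg N" using assms by (simp add: rep_alg_diff)
  have "nf (S - T) = (\<lambda>z. 0)" using assms(4) by (simp add: nf_diff)
  then obtain F where "finite F" "S - T = (\<Sum>z\<in>F. scal_op 0 * mono_op N z)"
    using rep_alg_expansion[OF N D] by auto
  hence "S - T = 0" by (simp add: scal_op_zero)
  thus ?thesis by simp
qed

lemma eqA_iff_rep:
  assumes N: "N \<ge> 1" and "f \<in> fa_carrier" "g \<in> fa_carrier"
  shows "eqA N f g \<longleftrightarrow> rep N (pm_of f) = rep N (pm_of (g :: 'k::comm_ring_1 fa))"
proof
  assume "eqA N f g"
  hence "pm_of f - pm_of g \<in> ideal_pm N" using assms eqA_iff_ideal_pm by blast
  thus "rep N (pm_of f) = rep N (pm_of g)" using rep_ideal_pm[OF N, of "pm_of f - pm_of g"] by (simp add: rep_diff)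
next
  assume "rep N (pm_of f) = rep N (pm_of g)"
  hence "rep N (pm_of f - pm_of g) = 0" by (simp add: rep_diff)
  thus "eqA N f g" using rep_kernel[OF N] assms eqA_iff_ideal_pm by blast
qed

section \<open>The grading\<close>

definition mdeg :: "nat \<Rightarrow> nat \<times> nat \<Rightarrow> nat" where "mdeg N z = fst z + (N - 1) * snd z"
definition homog_fun :: "nat \<Rightarrow> nat \<Rightarrow> (nat \<times> nat \<Rightarrow> 'k::zero) \<Rightarrow> bool" where
  "homog_fun N p v \<longleftrightarrow> (\<forall>z. v z \<noteq> 0 \<longrightarrow> mdeg N z = p)"

lemma homog_fun_shift_x: assumes "homog_fun N p v" shows "homog_fun N (Suc p) (shift_x v)"
  unfolding homog_fun_def
proof (intro allI impI)
  fix z assume z: "shift_x v z \<noteq> 0"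
  obtain a b where ab: "z = (a,b)" by (cases z)
  have "a \<noteq> 0" "v (a - 1, b) \<noteq> 0" using z by (auto simp: ab shift_x_def split: if_splits)
  hence "mdeg N (a - 1, b) = p" using assms by (auto simp: homog_fun_def)
  thus "mdeg N z = Suc p" using \<open>a \<noteq> 0\<close> by (auto simp: ab mdeg_def)
qed

lemma homog_fun_act_y: assumes "homog_fun N p v" shows "homog_fun N (p + (N - 1)) (act_y N v)"
  unfolding homog_fun_def
proof (intro allI impI)
  fix z assume z: "act_y N v z \<noteq> 0"
  obtain a b where ab: "z = (a,b)" by (cases z)
  show "mdeg N z = p + (N - 1)"
  proof (cases "b \<noteq> 0 \<and> v (a, b - 1) \<noteq> 0")
    case True
    hence "mdeg N (a, b - 1) = p" using assms by (auto simp: homog_fun_def)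
    thus ?thesis using True by (cases b) (auto simp: ab mdeg_def)
  next
    case False
    hence "N - 1 \<le> a \<and> v (a - (N - 1), b) \<noteq> 0" using z by (auto simp: ab act_y_def split: if_splits)
    hence "N - 1 \<le> a" "mdeg N (a - (N - 1), b) = p" using assms by (auto simp: homog_fun_def)
    thus ?thesis by (auto simp: ab mdeg_def)
  qed
qed

lemma wdeg_Cons: "wdeg N (b # l) = (if b then N - 1 else 1) + wdeg N l"
  by (cases b) (simp_all add: wdeg_def)

lemma homog_fun_word_op: "homog_fun N p v \<Longrightarrow> homog_fun N (wdeg N l + p) (app (word_op N l) v)"
proof (induction l arbitrary: p v)
  case Nil thus ?case by (simp add: app_one wdeg_def)
next
  case (Cons b l)
  have h: "homog_fun N (wdeg N l + p) (app (word_op N l) v)" using Cons by blast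
  show ?case
  proof (cases b)
    case True
    thus ?thesis using homog_fun_act_y[OF h] by (simp add: app_times app_Y_op wdeg_Cons add_ac)
  next
    case False
    thus ?thesis using homog_fun_shift_x[OF h] by (simp add: app_times app_X_op wdeg_Cons)
  qed
qed

lemma homog_fun_nf_word_op: "homog_fun N (wdeg N l) (nf (word_op N l) :: nat \<times> nat \<Rightarrow> 'k::comm_ring_1)"
proof -
  have "homog_fun N 0 (delta (0,0) :: nat \<times> nat \<Rightarrow> 'k)" by (simp add: homog_fun_def delta_def mdeg_def)
  from homog_fun_word_op[OF this, of l] show ?thesis by (simp add: nf_def)
qed

definition homog_op :: "nat \<Rightarrow> nat \<Rightarrow> 'k::comm_ring_1 lin_op \<Rightarrow> bool" where
  "homog_op N p T \<longleftrightarrow> homog_fun N p (nf T)"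

definition fa_proj :: "nat \<Rightarrow> nat \<Rightarrow> 'k::zero fa \<Rightarrow> 'k fa" where
  "fa_proj N p f = (\<lambda>l. if wdeg N l = p then f l else 0)"

lemma fa_proj_carrier: "f \<in> fa_carrier \<Longrightarrow> fa_proj N p f \<in> fa_carrier"
  unfolding fa_carrier_def fa_proj_def by (auto elim: rev_finite_subset)

lemma fa_proj_homog: "fa_homog N p (fa_proj N p f)"
  by (simp add: fa_homog_def fa_proj_def)

lemma nf_rep_pm_of:
  assumes "f \<in> fa_carrier" "finite S" "Poly_Mapping.keys (pm_of f) \<subseteq> S"
  shows "nf (rep N (pm_of f)) = (\<lambda>z. \<Sum>w\<in>S. f (letters w) * nf (word_op N (letters w)) z)"
  by (simp add: rep_superset[OF assms(2,3)] nf_sum nf_scal_op lookup_pm_of[OF assms(1)])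

lemma keys_pm_of_fa_proj: "f \<in> fa_carrier \<Longrightarrow> Poly_Mapping.keys (pm_of (fa_proj N p f)) \<subseteq> Poly_Mapping.keys (pm_of f)"
  by (auto simp: in_keys_iff lookup_pm_of fa_proj_carrier) (simp add: fa_proj_def split: if_splits)

lemma nf_rep_fa_proj:
  assumes f: "(f::'k::comm_ring_1 fa) \<in> fa_carrier"
  shows "nf (rep N (pm_of (fa_proj N p f))) = (\<lambda>z. if mdeg N z = p then nf (rep N (pm_of f)) z else 0)"
proof
  fix z
  let ?S = "Poly_Mapping.keys (pm_of f)"
  have e1: "nf (rep N (pm_of (fa_proj N p f))) z = (\<Sum>w\<in>?S. fa_proj N p f (letters w) * nf (word_op N (letters w)) z)"
    using nf_rep_pm_of[OF fa_proj_carrier[OF f] _ keys_pm_of_fa_proj[OF f]] by simp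
  have e2: "nf (rep N (pm_of f)) z = (\<Sum>w\<in>?S. f (letters w) * nf (word_op N (letters w)) z)"
    using nf_rep_pm_of[OF f, of ?S N] by simp
  have hw: "(nf (word_op N (letters w)) z :: 'k) \<noteq> 0 \<Longrightarrow> mdeg N z = wdeg N (letters w)" for w
    using homog_fun_nf_word_op[of N "letters w"] unfolding homog_fun_def by blast
  show "nf (rep N (pm_of (fa_proj N p f))) z = (if mdeg N z = p then nf (rep N (pm_of f)) z else 0)"
  proof (cases "mdeg N z = p")
    case True
    show ?thesis unfolding e1 e2 if_P[OF True]
    proof (rule sum.cong[OF refl])
      fix w show "fa_proj N p f (letters w) * nf (word_op N (letters w)) z = f (letters w) * nf (word_op N (letters w)) z"
      proof -
        have "wdeg N (letters w) \<noteq> p \<Longrightarrow> (nf (word_op N (letters w)) z :: 'k) = 0" using hw[of w] True by auto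
        thus ?thesis by (cases "wdeg N (letters w) = p") (simp_all add: fa_proj_def)
      qed
    qed
  next
    case False
    show ?thesis unfolding e1 e2 if_not_P[OF False]
    proof (rule sum.neutral, rule ballI)
      fix w show "fa_proj N p f (letters w) * nf (word_op N (letters w)) z = 0"
      proof -
        have "wdeg N (letters w) = p \<Longrightarrow> (nf (word_op N (letters w)) z :: 'k) = 0" using hw[of w] False by auto
        thus ?thesis by (cases "wdeg N (letters w) = p") (simp_all add: fa_proj_def)
      qed
    qed
  qed
qed

lemma homog_op_rep_fa_homog:
  assumes h: "h \<in> fa_carrier" "fa_homog N p h"
  shows "homog_op N p (rep N (pm_of h))"
proof -
  have "fa_proj N p h = h" using h(2) by (auto simp: fa_proj_def fa_homog_def fun_eq_iff)
  hence "nf (rep N (pm_of h)) = (\<lambda>z. if mdeg N z = p then nf (rep N (pm_of h)) z else 0)"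
    using nf_rep_fa_proj[OF h(1), of N p] by simp
  thus ?thesis unfolding homog_op_def homog_fun_def by (metis)
qed

lemma homogA_iff_homog_op:
  assumes N: "N \<ge> 1" and f: "f \<in> fa_carrier"
  shows "homogA N p f \<longleftrightarrow> homog_op N p (rep N (pm_of (f :: 'k::comm_ring_1 fa)))"
proof
  assume "homogA N p f"
  then obtain h where h: "h \<in> fa_carrier" "fa_homog N p h" "eqA N f h" by (auto simp: homogA_def)
  have "rep N (pm_of f) = rep N (pm_of h)" using eqA_iff_rep[OF N f h(1)] h(3) by simp
  thus "homog_op N p (rep N (pm_of f))" using homog_op_rep_fa_homog[OF h(1,2)] by simp
next
  assume H: "homog_op N p (rep N (pm_of f))"
  have "nf (rep N (pm_of (fa_proj N p f))) = nf (rep N (pm_of f))"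
    using H unfolding nf_rep_fa_proj[OF f] homog_op_def homog_fun_def by (intro ext) auto
  hence "rep N (pm_of (fa_proj N p f)) = rep N (pm_of f)" by (intro rep_alg_eqI[OF N]) auto
  hence "eqA N f (fa_proj N p f)" using eqA_iff_rep[OF N f fa_proj_carrier[OF f]] by simp
  thus "homogA N p f" unfolding homogA_def using fa_proj_carrier[OF f] fa_proj_homog by blast
qed

section \<open>Supports and commutators with x\<close>

definition supp_in :: "(nat \<times> nat \<Rightarrow> bool) \<Rightarrow> 'k::comm_ring_1 lin_op \<Rightarrow> bool" where
  "supp_in P T \<longleftrightarrow> (\<forall>z. \<not> P z \<longrightarrow> nf T z = 0)"

lemma supp_in_add: "supp_in P S \<Longrightarrow> supp_in P T \<Longrightarrow> supp_in P (S + T)"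
  by (simp add: supp_in_def nf_add)
lemma supp_in_diff: "supp_in P S \<Longrightarrow> supp_in P T \<Longrightarrow> supp_in P (S - T)"
  by (simp add: supp_in_def nf_diff)
lemma supp_in_scal_op: "supp_in P T \<Longrightarrow> supp_in P (scal_op c * T)"
  by (simp add: supp_in_def nf_scal_op)
lemma supp_in_zero: "supp_in P 0"
  by (simp add: supp_in_def nf_zero)
lemma supp_in_sum: "(\<And>a. a \<in> A \<Longrightarrow> supp_in P (f a)) \<Longrightarrow> supp_in P (sum f A)"
  by (induction A rule: infinite_finite_induct) (auto intro: supp_in_add supp_in_zero)
lemma supp_in_mono: "supp_in Q T \<Longrightarrow> (\<And>z. Q z \<Longrightarrow> P z) \<Longrightarrow> supp_in P T"
  by (auto simp: supp_in_def)
lemma supp_in_mono_op: "P z \<Longrightarrow> supp_in P (mono_op N z)"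
  by (auto simp: supp_in_def nf_mono_op delta_def)
lemma supp_in_False: "supp_in (\<lambda>z. False) T \<longleftrightarrow> nf T = (\<lambda>z. 0)"
  by (auto simp: supp_in_def)

lemma supp_in_Xpow: "supp_in P T \<Longrightarrow> supp_in (\<lambda>z. k \<le> fst z \<and> P (fst z - k, snd z)) (X_op ^ k * T)"
  by (auto simp: supp_in_def nf_times app_X_op_pow)

lemma supp_in_Y: "supp_in P T \<Longrightarrow>
   supp_in (\<lambda>z. (0 < snd z \<and> P (fst z, snd z - 1)) \<or> (N - 1 \<le> fst z \<and> P (fst z - (N - 1), snd z))) (Y_op N * T)"
  by (auto simp: supp_in_def nf_times app_Y_op act_y_def)

lemma homog_op_supp_in: "homog_op N p T \<longleftrightarrow> supp_in (\<lambda>z. mdeg N z = p) T"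
  by (auto simp: homog_op_def homog_fun_def supp_in_def)

lemma rep_alg_expandE:
  assumes N: "N \<ge> 1" and T: "T \<in> rep_alg N"
  obtains S where "finite S" "\<forall>z. z \<notin> S \<longrightarrow> nf T z = 0" "T = (\<Sum>z\<in>S. scal_op (nf T z) * mono_op N z)"
  using rep_alg_expansion[OF N T] by blast

lemma rep_alg_snd_bounded:
  assumes N: "N \<ge> 1" and T: "T \<in> rep_alg N"
  obtains m where "supp_in (\<lambda>z. snd z < m) T"
proof -
  obtain F where F: "finite F" "\<forall>z. z \<notin> F \<longrightarrow> nf T z = 0" using rep_alg_expandE[OF N T] by blast
  have "supp_in (\<lambda>z. snd z < Suc (\<Sum>z\<in>F. snd z)) T"
    unfolding supp_in_def
  proof (intro allI impI)
    fix z :: "nat \<times> nat" assume "\<not> snd z < Suc (\<Sum>z\<in>F. snd z)"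
    hence "z \<notin> F" using member_le_sum[of z F snd] F(1) by auto
    thus "nf T z = 0" using F(2) by blast
  qed
  thus ?thesis by (rule that)
qed

lemma Y_X_pow_relation: "N \<ge> 1 \<Longrightarrow> Y_op N * X_op ^ e - X_op ^ e * Y_op N = of_nat e * (X_op ^ (e + (N - 1)) :: 'k::comm_ring_1 lin_op)"
  using commutator_power[of "Y_op N" X_op "N - 1" e] Y_X_relation[of N] by simp

definition ad_Ypow :: "nat \<Rightarrow> nat \<Rightarrow> 'k::comm_ring_1 lin_op" where
  "ad_Ypow N n = Y_op N ^ n * X_op - X_op * Y_op N ^ n"

definition ad_Ypow_rest :: "nat \<Rightarrow> nat \<Rightarrow> 'k::comm_ring_1 lin_op" where
  "ad_Ypow_rest N n = ad_Ypow N (Suc n) - of_nat (Suc n) * mono_op N (N, n)"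

lemma ad_Ypow_0: "ad_Ypow N 0 = 0" by (simp add: ad_Ypow_def)

lemma ad_Ypow_Suc: "N \<ge> 1 \<Longrightarrow> ad_Ypow N (Suc n) = Y_op N * ad_Ypow N n + X_op ^ N * (Y_op N ^ n :: 'k::comm_ring_1 lin_op)"
proof -
  assume N: "N \<ge> 1"
  have "ad_Ypow N (Suc n) = Y_op N * ad_Ypow N n + (Y_op N * X_op - X_op * Y_op N) * (Y_op N ^ n :: 'k lin_op)"
    by (simp add: ad_Ypow_def algebra_simps)
  thus ?thesis by (simp only: Y_X_relation[OF N])
qed

lemma mult_of_nat_left: "a * (of_nat k * b) = of_nat k * (a * (b :: 'a::ring_1))"
  by (metis mult.assoc mult_of_nat_commute)

lemma ad_Ypow_rest_0: "N \<ge> 1 \<Longrightarrow> ad_Ypow_rest N 0 = (0 :: 'k::comm_ring_1 lin_op)"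
  by (simp add: ad_Ypow_rest_def ad_Ypow_Suc ad_Ypow_0 mono_op_def)

lemma ad_Ypow_rest_Suc: assumes N: "N \<ge> 1"
  shows "ad_Ypow_rest N (Suc n) = Y_op N * ad_Ypow_rest N n + of_nat (Suc n) * (of_nat N * (mono_op N (N + (N - 1), n) :: 'k::comm_ring_1 lin_op))"
proof -
  let ?Y = "Y_op N :: 'k lin_op" and ?X = "X_op :: 'k lin_op"
  have C1: "ad_Ypow N (Suc n) = ad_Ypow_rest N n + of_nat (Suc n) * mono_op N (N, n)" by (simp add: ad_Ypow_rest_def)
  have "ad_Ypow_rest N (Suc n) = ?Y * ad_Ypow N (Suc n) + ?X ^ N * ?Y ^ Suc n - of_nat (Suc (Suc n)) * (?X ^ N * ?Y ^ Suc n)"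
    by (simp add: ad_Ypow_rest_def ad_Ypow_Suc[OF N] mono_op_def)
  also have "\<dots> = ?Y * ad_Ypow_rest N n + of_nat (Suc n) * ((?Y * ?X ^ N - ?X ^ N * ?Y) * ?Y ^ n)"
    unfolding C1 by (simp add: distrib_left mult_of_nat_left mono_op_def algebra_simps)
  also have "?Y * ?X ^ N - ?X ^ N * ?Y = of_nat N * ?X ^ (N + (N - 1))"
    using Y_X_pow_relation[OF N, of N] by simp
  finally show ?thesis by (simp add: mono_op_def mult.assoc)
qed

lemma supp_in_of_nat: "supp_in P T \<Longrightarrow> supp_in P (of_nat k * T)"
  using supp_in_scal_op[of P T "of_nat k"] by (simp add: scal_op_of_nat)

lemma ad_Ypow_rest_supp: assumes N: "N \<ge> 1"
  shows "supp_in (\<lambda>z. snd z < n \<and> N \<le> fst z \<and> mdeg N z = N + n * (N - 1)) (ad_Ypow_rest N n :: 'k::comm_ring_1 lin_op)"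
proof (induction n)
  case 0 thus ?case by (simp add: ad_Ypow_rest_0[OF N] supp_in_zero)
next
  case (Suc n)
  obtain K where K: "N = Suc K" using N by (cases N) auto
  have a: "supp_in (\<lambda>z. snd z < Suc n \<and> N \<le> fst z \<and> mdeg N z = N + Suc n * (N - 1)) (Y_op N * ad_Ypow_rest N n :: 'k lin_op)"
  proof (rule supp_in_mono[OF supp_in_Y[OF Suc]])
    fix z :: "nat \<times> nat"
    obtain a b where z: "z = (a,b)" by (cases z)
    assume "(0 < snd z \<and> snd (fst z, snd z - 1) < n \<and> N \<le> fst (fst z, snd z - 1) \<and>
         mdeg N (fst z, snd z - 1) = N + n * (N - 1)) \<or>
        (N - 1 \<le> fst z \<and> snd (fst z - (N - 1), snd z) < n \<and> N \<le> fst (fst z - (N - 1), snd z) \<and>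
         mdeg N (fst z - (N - 1), snd z) = N + n * (N - 1))"
    thus "snd z < Suc n \<and> N \<le> fst z \<and> mdeg N z = N + Suc n * (N - 1)"
    proof
      assume h: "0 < snd z \<and> snd (fst z, snd z - 1) < n \<and> N \<le> fst (fst z, snd z - 1) \<and>
         mdeg N (fst z, snd z - 1) = N + n * (N - 1)"
      then obtain b' where b: "b = Suc b'" using z by (cases b) auto
      show ?thesis using h unfolding z b K by (simp add: mdeg_def algebra_simps)
    next
      assume h: "N - 1 \<le> fst z \<and> snd (fst z - (N - 1), snd z) < n \<and> N \<le> fst (fst z - (N - 1), snd z) \<and>
         mdeg N (fst z - (N - 1), snd z) = N + n * (N - 1)"
      thus ?thesis unfolding z K by (auto simp: mdeg_def algebra_simps)
    qed
  qed
  have b: "supp_in (\<lambda>z. snd z < Suc n \<and> N \<le> fst z \<and> mdeg N z = N + Suc n * (N - 1))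
     (of_nat (Suc n) * (of_nat N * (mono_op N (N + (N - 1), n) :: 'k lin_op)))"
    by (intro supp_in_of_nat supp_in_mono_op) (simp add: K mdeg_def algebra_simps)
  show ?case unfolding ad_Ypow_rest_Suc[OF N] by (rule supp_in_add[OF a b])
qed

lemma ad_Ypow_Suc_decomp: "ad_Ypow N (Suc n) = of_nat (Suc n) * mono_op N (N, n) + ad_Ypow_rest N n"
  by (simp add: ad_Ypow_rest_def)

lemma ad_Ypow_supp: assumes N: "N \<ge> 1"
  shows "supp_in (\<lambda>z. snd z < d \<and> N \<le> fst z \<and> mdeg N z + N - 1 = N + d * (N - 1)) (ad_Ypow N d :: 'k::comm_ring_1 lin_op)"
proof (cases d)
  case 0 thus ?thesis by (simp add: ad_Ypow_0 supp_in_zero)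
next
  case (Suc n)
  obtain K where K: "N = Suc K" using N by (cases N) auto
  have a: "supp_in (\<lambda>z. snd z < d \<and> N \<le> fst z \<and> mdeg N z + N - 1 = N + d * (N - 1)) (of_nat (Suc n) * (mono_op N (N, n) :: 'k lin_op))"
    by (intro supp_in_of_nat supp_in_mono_op) (simp add: K Suc mdeg_def algebra_simps)
  have b: "supp_in (\<lambda>z. snd z < d \<and> N \<le> fst z \<and> mdeg N z + N - 1 = N + d * (N - 1)) (ad_Ypow_rest N n :: 'k lin_op)"
    by (rule supp_in_mono[OF ad_Ypow_rest_supp[OF N]]) (auto simp: Suc K algebra_simps)
  show ?thesis unfolding Suc ad_Ypow_Suc_decomp by (rule supp_in_add[OF a[unfolded Suc] b[unfolded Suc]])
qed

lemma mono_op_commutator: "mono_op N (e, d) * X_op - X_op * mono_op N (e, d) = X_op ^ e * (ad_Ypow N d :: 'k::comm_ring_1 lin_op)"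
  by (simp add: mono_op_def ad_Ypow_def algebra_simps power_commutes flip: mult.assoc)

lemma supp_X_pow_ad_Ypow: assumes N: "N \<ge> 1"
  shows "supp_in (\<lambda>z. snd z < d \<and> N + e \<le> fst z \<and> mdeg N z = Suc (mdeg N (e, d)))
     (X_op ^ e * (ad_Ypow N d :: 'k::comm_ring_1 lin_op))"
proof (rule supp_in_mono[OF supp_in_Xpow[OF ad_Ypow_supp[OF N]]])
  fix z :: "nat \<times> nat"
  obtain K where K: "N = Suc K" using N by (cases N) auto
  obtain a b where z: "z = (a,b)" by (cases z)
  assume "e \<le> fst z \<and> snd (fst z - e, snd z) < d \<and> N \<le> fst (fst z - e, snd z) \<and>
          mdeg N (fst z - e, snd z) + N - 1 = N + d * (N - 1)"
  thus "snd z < d \<and> N + e \<le> fst z \<and> mdeg N z = Suc (mdeg N (e, d))"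
    unfolding z K by (auto simp: mdeg_def algebra_simps)
qed

lemma commutator_X_sum:
  "(sum f A) * X_op - X_op * (sum f A) = (\<Sum>a\<in>A. f a * X_op - X_op * (f a :: 'k::comm_ring_1 lin_op))"
  by (simp add: sum_distrib_left sum_distrib_right sum_subtractf)

lemma commutator_X_scal: "(scal_op c * M) * X_op - X_op * (scal_op c * M) = scal_op c * (M * X_op - X_op * (M :: 'k::comm_ring_1 lin_op))"
  by (simp add: algebra_simps mult.assoc) (metis mult.assoc scal_op_comm)

lemma supp_ad_X:
  assumes N: "N \<ge> 1" and Q: "Q \<in> rep_alg N" and P: "supp_in P Q"
  shows "supp_in (\<lambda>z. \<exists>z'. P z' \<and> snd z < snd z' \<and> N + fst z' \<le> fst z \<and> mdeg N z = Suc (mdeg N z'))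
           (Q * X_op - X_op * (Q :: 'k::comm_ring_1 lin_op))"
proof -
  obtain S where S: "finite S" "Q = (\<Sum>z\<in>S. scal_op (nf Q z) * mono_op N z)"
    using rep_alg_expandE[OF N Q] by blast
  define T where "T = (\<Sum>z\<in>S. scal_op (nf Q z) * mono_op N z)"
  have QT: "Q = T" using S(2) by (simp add: T_def)
  show ?thesis
  proof (unfold QT, unfold T_def commutator_X_sum, rule supp_in_sum)
    fix z' assume "z' \<in> S"
    obtain e d where z': "z' = (e,d)" by (cases z')
    show "supp_in (\<lambda>z. \<exists>z'. P z' \<and> snd z < snd z' \<and> N + fst z' \<le> fst z \<and> mdeg N z = Suc (mdeg N z'))
       (scal_op (nf Q z') * mono_op N z' * X_op - X_op * (scal_op (nf Q z') * mono_op N z'))"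
    proof (cases "nf Q z' = 0")
      case True thus ?thesis by (simp add: scal_op_zero supp_in_zero)
    next
      case False
      hence "P z'" using P unfolding supp_in_def by blast
      show ?thesis unfolding commutator_X_scal z' mono_op_commutator
        by (rule supp_in_scal_op, rule supp_in_mono[OF supp_X_pow_ad_Ypow[OF N]]) (use \<open>P z'\<close> z' in auto)
    qed
  qed
qed

lemma supp_ad_X_fst: "N \<ge> 1 \<Longrightarrow> Q \<in> rep_alg N \<Longrightarrow> supp_in (\<lambda>z. N \<le> fst z) (Q * X_op - X_op * (Q :: 'k::comm_ring_1 lin_op))"
  by (rule supp_in_mono[OF supp_ad_X[of N Q "\<lambda>z. True"]]) (auto simp: supp_in_def)

lemma supp_ad_X_snd: "N \<ge> 1 \<Longrightarrow> Q \<in> rep_alg N \<Longrightarrow> supp_in (\<lambda>z. snd z < m) Q \<Longrightarrow>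
    supp_in (\<lambda>z. Suc (snd z) < m) (Q * X_op - X_op * (Q :: 'k::comm_ring_1 lin_op))"
  by (rule supp_in_mono[OF supp_ad_X[of N Q]]) auto

lemma nf_ad_Ypow_lead: assumes N: "N \<ge> 1"
  shows "nf (X_op ^ e * ad_Ypow N (Suc n)) (e + N, n) = (of_nat (Suc n) :: 'k::comm_ring_1)"
proof -
  have r: "nf (X_op ^ e * ad_Ypow_rest N n) (e + N, n) = (0::'k)"
    using supp_in_Xpow[OF ad_Ypow_rest_supp[OF N], of e] by (auto simp: supp_in_def)
  have "X_op ^ e * ad_Ypow N (Suc n) = of_nat (Suc n) * mono_op N (e + N, n) + X_op ^ e * (ad_Ypow_rest N n :: 'k lin_op)"
    by (simp add: ad_Ypow_Suc_decomp distrib_left mult_of_nat_left mono_op_def power_add mult.assoc del: of_nat_Suc)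
  thus ?thesis using r
    by (simp add: nf_add nf_mono_op delta_def flip: scal_op_of_nat) (simp add: nf_scal_op nf_mono_op delta_def)
qed

lemma homog_fun_app_Ypow: "homog_fun N q v \<Longrightarrow> homog_fun N (q + d * (N - 1)) (app (Y_op N ^ d) v)"
proof (induction d arbitrary: q v)
  case 0 thus ?case by (simp add: app_one)
next
  case (Suc d)
  have "homog_fun N (q + d * (N - 1)) (app (Y_op N ^ d) v)" using Suc by blast
  from homog_fun_act_y[OF this] have "homog_fun N (q + d * (N - 1) + (N - 1)) (app (Y_op N ^ Suc d) v)"
    by (simp add: app_times app_Y_op)
  moreover have "q + d * (N - 1) + (N - 1) = q + Suc d * (N - 1)" by simp
  ultimately show ?case by metis
qed

lemma homog_fun_app_Xpow: "homog_fun N q v \<Longrightarrow> homog_fun N (q + e) (app (X_op ^ e) v)"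
proof (induction e arbitrary: q v)
  case 0 thus ?case by (simp add: app_one)
next
  case (Suc e)
  have "homog_fun N (q + e) (app (X_op ^ e) v)" using Suc by blast
  from homog_fun_shift_x[OF this] show ?case by (simp add: app_times app_X_op)
qed

lemma homog_op_mono_op_mult: "homog_op N q S \<Longrightarrow> homog_op N (mdeg N z + q) (mono_op N z * S)"
  unfolding homog_op_def nf_times mono_op_def app_times
  using homog_fun_app_Xpow[OF homog_fun_app_Ypow, of N q "nf S" "snd z" "fst z"]
  by (simp add: mdeg_def algebra_simps)

lemma homog_op_add: "homog_op N p S \<Longrightarrow> homog_op N p T \<Longrightarrow> homog_op N p (S + T)"
  by (simp add: homog_op_supp_in supp_in_add)
lemma homog_op_diff: "homog_op N p S \<Longrightarrow> homog_op N p T \<Longrightarrow> homog_op N p (S - T)"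
  by (simp add: homog_op_supp_in supp_in_diff)
lemma homog_op_scal_op: "homog_op N p T \<Longrightarrow> homog_op N p (scal_op c * T)"
  by (simp add: homog_op_supp_in supp_in_scal_op)
lemma homog_op_of_nat: "homog_op N p T \<Longrightarrow> homog_op N p (of_nat k * T)"
  by (simp add: homog_op_supp_in supp_in_of_nat)
lemma homog_op_zero: "homog_op N p 0"
  by (simp add: homog_op_supp_in supp_in_zero)
lemma homog_op_sum: "(\<And>a. a \<in> A \<Longrightarrow> homog_op N p (f a)) \<Longrightarrow> homog_op N p (sum f A)"
  by (simp add: homog_op_supp_in supp_in_sum)

lemma homog_op_mult:
  assumes N: "N \<ge> 1" and T: "T \<in> rep_alg N" and hT: "homog_op N p T" and hS: "homog_op N q S"
  shows "homog_op N (p + q) (T * S)"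
proof -
  obtain F where F: "finite F" "T = (\<Sum>z\<in>F. scal_op (nf T z) * mono_op N z)"
    using rep_alg_expandE[OF N T] by blast
  have "T * S = (\<Sum>z\<in>F. scal_op (nf T z) * (mono_op N z * S))"
    by (subst F(2)) (simp add: sum_distrib_right mult.assoc)
  also have "homog_op N (p + q) \<dots>"
  proof (rule homog_op_sum)
    fix z assume "z \<in> F"
    show "homog_op N (p + q) (scal_op (nf T z) * (mono_op N z * S))"
    proof (cases "nf T z = 0")
      case True thus ?thesis by (simp add: scal_op_zero homog_op_zero)
    next
      case False
      hence "mdeg N z = p" using hT unfolding homog_op_def homog_fun_def by blast
      thus ?thesis using homog_op_mono_op_mult[OF hS, of z] by (simp add: homog_op_scal_op)
    qed
  qed
  finally show ?thesis .
qed

lemma homog_op_mono_op: "homog_op N (mdeg N z) (mono_op N z)"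
  by (simp add: homog_op_def homog_fun_def nf_mono_op delta_def)
lemma homog_op_Xpow: "homog_op N e (X_op ^ e)"
  using homog_op_mono_op[of N "(e,0)"] by (simp add: mono_op_def mdeg_def)
lemma homog_op_Ypow: "homog_op N (d * (N - 1)) (Y_op N ^ d)"
  using homog_op_mono_op[of N "(0,d)"] by (simp add: mono_op_def mdeg_def mult.commute)
lemma homog_op_X: "homog_op N 1 X_op" using homog_op_Xpow[of N 1] by simp
lemma homog_op_Y: "homog_op N (N - 1) (Y_op N)" using homog_op_Ypow[of N 1] by simp

definition ad_X :: "'k::comm_ring_1 lin_op \<Rightarrow> 'k lin_op" where "ad_X Q = Q * X_op - X_op * Q"

lemma ad_X_add: "ad_X (A + B) = ad_X A + ad_X B" by (simp add: ad_X_def algebra_simps)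
lemma ad_X_zero: "ad_X 0 = 0" by (simp add: ad_X_def)
lemma ad_X_diff: "ad_X (A - B) = ad_X A - ad_X B" by (simp add: ad_X_def algebra_simps)
lemma ad_X_scal_op: "ad_X (scal_op c * M) = scal_op c * ad_X M" by (simp add: ad_X_def commutator_X_scal)

lemma rep_alg_eq_zeroI: "N \<ge> 1 \<Longrightarrow> T \<in> rep_alg N \<Longrightarrow> supp_in (\<lambda>z. False) T \<Longrightarrow> T = 0"
  by (rule rep_alg_eqI) (auto simp: supp_in_False nf_zero rep_alg_zero)

lemma supp_in_drop_top_mono:
  assumes N: "N \<ge> 1" and sT: "supp_in (\<lambda>z. mdeg N z = p \<and> snd z < Suc m) T"
  shows "supp_in (\<lambda>z. mdeg N z = p \<and> snd z < m)
    (T - scal_op (nf T (p - m * (N - 1), m)) * mono_op N (p - m * (N - 1), m))"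
  unfolding supp_in_def
proof (intro allI impI)
  fix z assume z: "\<not> (mdeg N z = p \<and> snd z < m)"
  show "nf (T - scal_op (nf T (p - m * (N - 1), m)) * mono_op N (p - m * (N - 1), m)) z = 0"
  proof (cases "z = (p - m * (N - 1), m)")
    case True thus ?thesis by (simp add: nf_diff nf_scal_op nf_mono_op delta_def)
  next
    case False
    hence "\<not> (mdeg N z = p \<and> snd z = m)" by (cases z) (auto simp: mdeg_def)
    hence "\<not> (mdeg N z = p \<and> snd z < Suc m)" using z by (auto simp: less_Suc_eq)
    hence "nf T z = 0" using sT unfolding supp_in_def by blast
    thus ?thesis using False by (simp add: nf_diff nf_scal_op nf_mono_op delta_def)
  qed
qed

lemma ad_X_mono_op_Suc:
  assumes eN: "N \<le> e"
  shows "ad_X (mono_op N (e - N, Suc m))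
    = of_nat (Suc m) * mono_op N (e, m) + X_op ^ (e - N) * (ad_Ypow_rest N m :: 'k::comm_ring_1 lin_op)"
proof -
  have "X_op ^ (e - N) * (X_op ^ N * Y_op N ^ m) = (X_op ^ (e - N + N) * Y_op N ^ m :: 'k lin_op)"
    by (simp add: power_add mult.assoc)
  hence "X_op ^ (e - N) * mono_op N (N, m) = (mono_op N (e, m) :: 'k lin_op)"
    using eN by (simp add: mono_op_def)
  thus ?thesis
    by (simp add: ad_X_def mono_op_commutator ad_Ypow_Suc_decomp distrib_left mult_of_nat_left
        del: of_nat_Suc)
qed

lemma ad_X_cancel_mono:
  fixes c :: "'k::field_char_0" and m :: nat
  assumes N: "N \<ge> 1" and eN: "N \<le> e"
  defines "\<Psi> \<equiv> scal_op (c / of_nat (Suc m)) * mono_op N (e - N, m)"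
  shows "homog_op N (mdeg N (e, m) - 1) (\<Psi> * Y_op N)"
    and "supp_in (\<lambda>z. mdeg N z = mdeg N (e, m) \<and> snd z < m)
           (ad_X (\<Psi> * Y_op N) - scal_op c * mono_op N (e, m))"
proof -
  obtain K where K: "N = Suc K" using N by (cases N) auto
  have \<Psi>Y: "\<Psi> * Y_op N = scal_op (c / of_nat (Suc m)) * mono_op N (e - N, Suc m)"
    by (simp add: \<Psi>_def mono_op_def mult.assoc power_commutes)
  have "mdeg N (e - N, Suc m) = mdeg N (e, m) - 1" using eN by (simp add: mdeg_def K algebra_simps)
  thus "homog_op N (mdeg N (e, m) - 1) (\<Psi> * Y_op N)"
    unfolding \<Psi>Y using homog_op_scal_op[OF homog_op_mono_op[of N "(e - N, Suc m)"]] by simp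
  have "scal_op (c / of_nat (Suc m)) * (of_nat (Suc m) * M) = scal_op c * M" for M :: "'k lin_op"
  proof -
    have "scal_op (c / of_nat (Suc m)) * (of_nat (Suc m) * M) = scal_op (c / of_nat (Suc m) * of_nat (Suc m)) * M"
      by (simp only: scal_op_of_nat[symmetric] scal_op_mult mult.assoc)
    also have "c / of_nat (Suc m) * of_nat (Suc m) = c" by (simp del: of_nat_Suc)
    finally show ?thesis .
  qed
  hence "ad_X (\<Psi> * Y_op N) - scal_op c * mono_op N (e, m)
      = scal_op (c / of_nat (Suc m)) * (X_op ^ (e - N) * ad_Ypow_rest N m)"
    unfolding \<Psi>Y ad_X_scal_op ad_X_mono_op_Suc[OF eN] by (simp add: distrib_left del: of_nat_Suc)
  moreover have "supp_in (\<lambda>z. mdeg N z = mdeg N (e, m) \<and> snd z < m)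
      (scal_op (c / of_nat (Suc m)) * (X_op ^ (e - N) * (ad_Ypow_rest N m :: 'k lin_op)))"
  proof (rule supp_in_scal_op, rule supp_in_mono[OF supp_in_Xpow[OF ad_Ypow_rest_supp[OF N]]])
    fix z :: "nat \<times> nat"
    assume "e - N \<le> fst z \<and> snd (fst z - (e - N), snd z) < m \<and> N \<le> fst (fst z - (e - N), snd z) \<and>
        mdeg N (fst z - (e - N), snd z) = N + m * (N - 1)"
    thus "mdeg N z = mdeg N (e, m) \<and> snd z < m" using eN by (cases z) (auto simp: mdeg_def K algebra_simps)
  qed
  ultimately show "supp_in (\<lambda>z. mdeg N z = mdeg N (e, m) \<and> snd z < m)
      (ad_X (\<Psi> * Y_op N) - scal_op c * mono_op N (e, m))" by simp
qed

text \<open>One step of the reduction: the monomial of y-degree m in T is either cancelled by a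
  commutator [\<Psi> y, x] (when its x-degree is at least N), or it is set aside in R.\<close>
lemma ad_X_reduction_step:
  fixes T :: "'k::field_char_0 lin_op"
  assumes N: "N \<ge> 1" and TA: "T \<in> rep_alg N" and sT: "supp_in (\<lambda>z. mdeg N z = p \<and> snd z < Suc m) T"
  obtains \<Psi> R where "\<Psi> \<in> rep_alg N" "homog_op N (p - 1) (\<Psi> * Y_op N)"
    "R \<in> rep_alg N" "supp_in (\<lambda>z. mdeg N z = p \<and> fst z < N) R"
    "supp_in (\<lambda>z. mdeg N z = p \<and> snd z < m) (T - ad_X (\<Psi> * Y_op N) - R)"
proof -
  define z0 where "z0 = (p - m * (N - 1), m)"
  define c where "c = nf T z0"
  have sT1: "supp_in (\<lambda>z. mdeg N z = p \<and> snd z < m) (T - scal_op c * mono_op N z0)"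
    unfolding c_def z0_def by (rule supp_in_drop_top_mono[OF N sT])
  have dz0: "mdeg N z0 = p" if "c \<noteq> 0"
    using that sT unfolding c_def supp_in_def by blast
  show ?thesis
  proof (cases "c \<noteq> 0 \<and> N \<le> fst z0")
    case True
    define e where "e = fst z0"
    have eN: "N \<le> e" and z0e: "z0 = (e, m)" and pe: "mdeg N (e, m) = p"
      using True dz0 by (auto simp: e_def z0_def)
    define \<Psi> where "\<Psi> = scal_op (c / of_nat (Suc m)) * mono_op N (e - N, m)"
    note cancel = ad_X_cancel_mono[OF N eN, where c = c and m = m, folded \<Psi>_def, unfolded pe]
    show ?thesis
    proof (rule that[of \<Psi> 0])
      show "\<Psi> \<in> rep_alg N" by (simp add: \<Psi>_def rep_alg_mult rep_alg_scal_op rep_alg_mono_op)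
      show "homog_op N (p - 1) (\<Psi> * Y_op N)" by (rule cancel(1))
      show "supp_in (\<lambda>z. mdeg N z = p \<and> snd z < m) (T - ad_X (\<Psi> * Y_op N) - 0)"
        using supp_in_diff[OF sT1 cancel(2)] by (simp add: z0e algebra_simps)
    qed (simp_all add: rep_alg_zero supp_in_zero)
  next
    case False
    show ?thesis
    proof (rule that[of 0 "scal_op c * mono_op N z0"])
      show "supp_in (\<lambda>z. mdeg N z = p \<and> fst z < N) (scal_op c * mono_op N z0)"
      proof (cases "c = 0")
        case True thus ?thesis by (simp add: scal_op_zero supp_in_zero)
      next
        case cF: False
        thus ?thesis using False dz0 by (intro supp_in_scal_op supp_in_mono_op) auto
      qed
    qed (use sT1 in \<open>simp_all add: rep_alg_zero homog_op_zero ad_X_zero rep_alg_mult rep_alg_scal_op rep_alg_mono_op\<close>)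
  qed
qed

lemma ad_X_reduction:
  fixes T :: "'k::field_char_0 lin_op"
  assumes N: "N \<ge> 1"
  shows "T \<in> rep_alg N \<Longrightarrow> supp_in (\<lambda>z. mdeg N z = p \<and> snd z < m) T \<Longrightarrow>
    \<exists>\<Psi>\<in>rep_alg N. homog_op N (p - 1) (\<Psi> * Y_op N) \<and>
       supp_in (\<lambda>z. mdeg N z = p \<and> fst z < N) (T - ad_X (\<Psi> * Y_op N))"
proof (induction m arbitrary: T)
  case 0
  hence "T = 0" using rep_alg_eq_zeroI[OF N] by (auto elim: supp_in_mono)
  thus ?case by (intro bexI[of _ 0]) (simp_all add: homog_op_zero ad_X_zero supp_in_zero rep_alg_zero)
next
  case (Suc m)
  obtain \<Psi> R where step: "\<Psi> \<in> rep_alg N" "homog_op N (p - 1) (\<Psi> * Y_op N)"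
    "R \<in> rep_alg N" "supp_in (\<lambda>z. mdeg N z = p \<and> fst z < N) R"
    "supp_in (\<lambda>z. mdeg N z = p \<and> snd z < m) (T - ad_X (\<Psi> * Y_op N) - R)"
    using ad_X_reduction_step[OF N Suc.prems] by blast
  have "T - ad_X (\<Psi> * Y_op N) - R \<in> rep_alg N"
    using Suc.prems(1) step(1,3) by (simp add: ad_X_def rep_alg_diff rep_alg_mult rep_alg_X rep_alg_Y)
  then obtain \<Psi>' where \<Psi>': "\<Psi>' \<in> rep_alg N" "homog_op N (p - 1) (\<Psi>' * Y_op N)"
    "supp_in (\<lambda>z. mdeg N z = p \<and> fst z < N) (T - ad_X (\<Psi> * Y_op N) - R - ad_X (\<Psi>' * Y_op N))"
    using Suc.IH step(5) by blast
  have eq: "T - ad_X ((\<Psi> + \<Psi>') * Y_op N) = R + (T - ad_X (\<Psi> * Y_op N) - R - ad_X (\<Psi>' * Y_op N))"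
    by (simp add: distrib_right ad_X_add)
  show ?case
  proof (intro bexI[of _ "\<Psi> + \<Psi>'"] conjI)
    show "\<Psi> + \<Psi>' \<in> rep_alg N" using step(1) \<Psi>'(1) by (rule rep_alg_add)
    show "homog_op N (p - 1) ((\<Psi> + \<Psi>') * Y_op N)"
      using step(2) \<Psi>'(2) by (simp add: distrib_right homog_op_add)
    show "supp_in (\<lambda>z. mdeg N z = p \<and> fst z < N) (T - ad_X ((\<Psi> + \<Psi>') * Y_op N))"
      unfolding eq by (rule supp_in_add[OF step(4) \<Psi>'(3)])
  qed
qed

lemma ad_X_reduction_homog:
  fixes T :: "'k::field_char_0 lin_op"
  assumes N: "N \<ge> 1" and TA: "T \<in> rep_alg N" and hT: "homog_op N p T"
  obtains \<Psi> where "\<Psi> \<in> rep_alg N" "homog_op N (p - 1) (\<Psi> * Y_op N)"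
    "supp_in (\<lambda>z. mdeg N z = p \<and> fst z < N) (T - ad_X (\<Psi> * Y_op N))"
proof -
  obtain m where "supp_in (\<lambda>z. snd z < m) T" by (rule rep_alg_snd_bounded[OF N TA])
  with hT have "supp_in (\<lambda>z. mdeg N z = p \<and> snd z < m) T"
    by (auto simp: supp_in_def homog_op_supp_in)
  thus ?thesis using ad_X_reduction[OF N TA] that by blast
qed

lemma ad_X_kernel_step:
  fixes V :: "'k::field_char_0 lin_op"
  assumes N: "N \<ge> 1" and VA: "V \<in> rep_alg N" and hV: "homog_op N q V" and cV: "ad_X V = 0"
    and sV: "supp_in (\<lambda>z. snd z < Suc (Suc n)) V"
  shows "supp_in (\<lambda>z. snd z < Suc n) V"
proof -
  define z0 where "z0 = (q - Suc n * (N - 1), Suc n)"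
  define c where "c = nf V z0"
  define V' where "V' = V - scal_op c * mono_op N z0"
  have V'A: "V' \<in> rep_alg N" by (simp add: V'_def rep_alg_diff rep_alg_mult rep_alg_scal_op rep_alg_mono_op VA)
  have "supp_in (\<lambda>z. mdeg N z = q \<and> snd z < Suc (Suc n)) V"
    using hV sV by (auto simp: supp_in_def homog_op_supp_in)
  hence "supp_in (\<lambda>z. mdeg N z = q \<and> snd z < Suc n) V'"
    unfolding V'_def c_def z0_def by (rule supp_in_drop_top_mono[OF N])
  hence sV': "supp_in (\<lambda>z. snd z < Suc n) V'" by (rule supp_in_mono) simp
  have c0: "c = 0"
  proof (rule ccontr)
    assume cnz: "c \<noteq> 0"
    hence dz0: "mdeg N z0 = q" using hV unfolding homog_op_def homog_fun_def c_def by blast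
    define e where "e = fst z0"
    have z0e: "z0 = (e, Suc n)" by (simp add: e_def z0_def)
    have "0 = ad_X V" using cV by simp
    also have "\<dots> = scal_op c * (X_op ^ e * ad_Ypow N (Suc n)) + ad_X V'"
      by (simp add: V'_def ad_X_diff ad_X_scal_op z0e ad_X_def[of "mono_op N _"] mono_op_commutator)
    finally have "nf (scal_op c * (X_op ^ e * ad_Ypow N (Suc n)) + ad_X V') (e + N, n) = 0"
      by (simp add: nf_zero flip: ad_X_def)
    moreover have "nf (ad_X V') (e + N, n) = 0"
      using supp_ad_X_snd[OF N V'A sV'] unfolding ad_X_def supp_in_def by auto
    ultimately have "c * of_nat (Suc n) = 0"
      by (simp add: nf_add nf_scal_op nf_ad_Ypow_lead[OF N] del: of_nat_Suc)
    thus False using cnz by (simp del: of_nat_Suc)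
  qed
  have "V = V'" by (simp add: V'_def c0 scal_op_zero)
  thus ?thesis using sV' by simp
qed

lemma ad_X_kernel:
  fixes V :: "'k::field_char_0 lin_op"
  assumes N: "N \<ge> 1" and VA: "V \<in> rep_alg N" and hV: "homog_op N q V" and cV: "ad_X V = 0"
  shows "V = scal_op (nf V (q, 0)) * X_op ^ q"
proof -
  obtain m where "supp_in (\<lambda>z. snd z < m) V" by (rule rep_alg_snd_bounded[OF N VA])
  hence "supp_in (\<lambda>z. snd z < Suc m) V" by (rule supp_in_mono) simp
  moreover have "supp_in (\<lambda>z. snd z < Suc n) V \<longrightarrow> supp_in (\<lambda>z. snd z < Suc 0) V" for n
    by (induction n) (auto intro: ad_X_kernel_step[OF N VA hV cV])
  ultimately have s0: "supp_in (\<lambda>z. snd z < Suc 0) V" by blast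
  show ?thesis
  proof (rule rep_alg_eqI[OF N VA])
    show "scal_op (nf V (q, 0)) * X_op ^ q \<in> rep_alg N" by (simp add: rep_alg_mult rep_alg_scal_op rep_alg_pow rep_alg_X)
    have Xq: "X_op ^ q = (mono_op N (q, 0) :: 'k lin_op)" by (simp add: mono_op_def)
    show "nf V = nf (scal_op (nf V (q, 0)) * X_op ^ q)"
    proof
      fix z :: "nat \<times> nat"
      obtain a b where z: "z = (a,b)" by (cases z)
      show "nf V z = nf (scal_op (nf V (q, 0)) * X_op ^ q) z"
      proof (cases "z = (q, 0)")
        case True thus ?thesis by (simp add: Xq nf_scal_op nf_mono_op delta_def)
      next
        case False
        have "nf V z = 0"
        proof (rule ccontr)
          assume nz: "nf V z \<noteq> 0"
          hence "mdeg N z = q" using hV unfolding homog_op_def homog_fun_def by blast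
          moreover have "snd z < Suc 0" using nz s0 unfolding supp_in_def by blast
          ultimately show False using False by (simp add: z mdeg_def)
        qed
        thus ?thesis using False by (simp add: Xq nf_scal_op nf_mono_op delta_def)
      qed
    qed
  qed
qed

lemma supp_fst_mult_X:
  assumes N: "N \<ge> 1" and TA: "T \<in> rep_alg N" and sT: "supp_in (\<lambda>z. N \<le> fst z) T"
  shows "supp_in (\<lambda>z. N \<le> fst z) (T * (X_op :: 'k::comm_ring_1 lin_op))"
proof -
  have "T * X_op = X_op ^ 1 * T + (T * X_op - X_op * T)" by simp
  moreover have "supp_in (\<lambda>z. N \<le> fst z) (X_op ^ 1 * T)"
    by (rule supp_in_mono[OF supp_in_Xpow[OF sT]]) auto
  ultimately show ?thesis using supp_in_add supp_ad_X_fst[OF N TA] by metis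
qed

lemma supp_Ypow_Xpow_commutator: assumes N: "N \<ge> 1"
  shows "supp_in (\<lambda>z. N \<le> fst z) (Y_op N ^ m * X_op ^ r - X_op ^ r * (Y_op N ^ m :: 'k::comm_ring_1 lin_op))"
proof (induction r)
  case 0 thus ?case by (simp add: supp_in_zero)
next
  case (Suc r)
  let ?D = "Y_op N ^ m * X_op ^ r - X_op ^ r * (Y_op N ^ m :: 'k lin_op)"
  have e: "Y_op N ^ m * X_op ^ Suc r - X_op ^ Suc r * Y_op N ^ m = ?D * X_op + X_op ^ r * (Y_op N ^ m * X_op - X_op * Y_op N ^ m)"
    by (simp add: power_Suc2 algebra_simps del: power_Suc)
  have a: "supp_in (\<lambda>z. N \<le> fst z) (?D * X_op)"
    by (rule supp_fst_mult_X[OF N _ Suc]) (simp add: rep_alg_diff rep_alg_mult rep_alg_pow rep_alg_X rep_alg_Y)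
  have b: "supp_in (\<lambda>z. N \<le> fst z) (X_op ^ r * (Y_op N ^ m * X_op - X_op * (Y_op N ^ m :: 'k lin_op)))"
    by (rule supp_in_mono[OF supp_in_Xpow[OF supp_ad_X_fst[OF N]]]) (auto simp: rep_alg_pow rep_alg_Y)
  show ?case unfolding e by (rule supp_in_add[OF a b])
qed

lemma nf_Xpow_Ypow_Xpow: assumes N: "N \<ge> 1" and kr: "k + r < N"
  shows "nf (X_op ^ k * Y_op N ^ m * X_op ^ r) (k + r, m) = (1 :: 'k::comm_ring_1)"
proof -
  let ?D = "Y_op N ^ m * X_op ^ r - X_op ^ r * (Y_op N ^ m :: 'k lin_op)"
  have e: "X_op ^ k * Y_op N ^ m * X_op ^ r = mono_op N (k + r, m) + X_op ^ k * ?D"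
    by (simp add: mono_op_def algebra_simps power_add mult.assoc)
  have "nf (X_op ^ k * ?D) (k + r, m) = 0"
  proof -
    have "\<not> (k \<le> k + r \<and> N \<le> k + r - k)" using kr by auto
    thus ?thesis using supp_in_Xpow[OF supp_Ypow_Xpow_commutator[OF N, where m=m and r=r], where k=k]
      unfolding supp_in_def by (metis fst_conv snd_conv)
  qed
  thus ?thesis unfolding e by (simp add: nf_add nf_mono_op delta_def)
qed

section \<open>Derivations of the operator algebra\<close>

definition is_der_op :: "nat \<Rightarrow> ('k::comm_ring_1 lin_op \<Rightarrow> 'k lin_op) \<Rightarrow> bool" where
  "is_der_op N \<Delta> \<longleftrightarrow> (\<forall>T\<in>rep_alg N. \<Delta> T \<in> rep_alg N) \<and>
     (\<forall>S\<in>rep_alg N. \<forall>T\<in>rep_alg N. \<Delta> (S + T) = \<Delta> S + \<Delta> T \<and> \<Delta> (S * T) = \<Delta> S * T + S * \<Delta> T) \<and>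
     (\<forall>c. \<forall>T\<in>rep_alg N. \<Delta> (scal_op c * T) = scal_op c * \<Delta> T)"

lemma is_der_opD:
  assumes "is_der_op N \<Delta>"
  shows "T \<in> rep_alg N \<Longrightarrow> \<Delta> T \<in> rep_alg N"
    and "S \<in> rep_alg N \<Longrightarrow> T \<in> rep_alg N \<Longrightarrow> \<Delta> (S + T) = \<Delta> S + \<Delta> T"
    and "S \<in> rep_alg N \<Longrightarrow> T \<in> rep_alg N \<Longrightarrow> \<Delta> (S * T) = \<Delta> S * T + S * \<Delta> T"
    and "T \<in> rep_alg N \<Longrightarrow> \<Delta> (scal_op c * T) = scal_op c * \<Delta> T"
  using assms unfolding is_der_op_def by blast+

lemma der_op_zero: "is_der_op N \<Delta> \<Longrightarrow> \<Delta> 0 = 0"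
  using is_der_opD(4)[of N \<Delta> 0 0] by (simp add: rep_alg_zero scal_op_zero)

lemma der_op_sum: "is_der_op N \<Delta> \<Longrightarrow> (\<And>a. a \<in> A \<Longrightarrow> f a \<in> rep_alg N) \<Longrightarrow> \<Delta> (sum f A) = (\<Sum>a\<in>A. \<Delta> (f a))"
proof (induction A rule: infinite_finite_induct)
  case (infinite A) thus ?case by (simp add: der_op_zero)
next
  case empty thus ?case by (simp add: der_op_zero)
next
  case (insert a A)
  thus ?case by (simp add: is_der_opD(2) rep_alg_sum)
qed

lemma der_op_diff: "is_der_op N \<Delta> \<Longrightarrow> S \<in> rep_alg N \<Longrightarrow> T \<in> rep_alg N \<Longrightarrow> \<Delta> (S - T) = \<Delta> S - \<Delta> T"
proof -
  assume D: "is_der_op N \<Delta>" and S: "S \<in> rep_alg N" and T: "T \<in> rep_alg N"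
  have e: "S - T = S + scal_op (-1) * T" by (simp add: scal_op_neg scal_op_one)
  have TA: "scal_op (-1) * T \<in> rep_alg N" by (simp add: rep_alg_mult rep_alg_scal_op T)
  have "\<Delta> (S + scal_op (-1) * T) = \<Delta> S + scal_op (-1) * \<Delta> T"
    using is_der_opD(2)[OF D S TA] is_der_opD(4)[OF D T] by simp
  thus ?thesis unfolding e by (simp add: scal_op_neg scal_op_one)
qed

lemma der_op_pow: assumes D: "is_der_op N \<Delta>" and T: "T \<in> rep_alg N"
  shows "\<Delta> (T ^ n) = (\<Sum>k<n. T ^ k * \<Delta> T * T ^ (n - 1 - k))"
proof (induction n)
  case 0 thus ?case using der_op_zero[OF D] is_der_opD(3)[OF D rep_alg_one rep_alg_one] by simp
next
  case (Suc n)
  have "\<Delta> (T ^ Suc n) = \<Delta> T * T ^ n + T * \<Delta> (T ^ n)"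
    by (simp add: is_der_opD(3)[OF D T rep_alg_pow[OF T]])
  also have "\<dots> = \<Delta> T * T ^ n + (\<Sum>k<n. T ^ Suc k * \<Delta> T * T ^ (n - Suc k))"
    by (simp add: Suc sum_distrib_left mult.assoc)
  also have "\<dots> = (\<Sum>k<Suc n. T ^ k * \<Delta> T * T ^ (Suc n - 1 - k))"
    by (simp add: sum.lessThan_Suc_shift del: sum.lessThan_Suc)
  finally show ?case .
qed

lemma der_op_zero_if_generators:
  assumes N: "N \<ge> 1" and D: "is_der_op N \<Delta>" and X0: "\<Delta> X_op = 0" and Y0: "\<Delta> (Y_op N) = 0"
    and T: "T \<in> rep_alg N"
  shows "\<Delta> T = 0"
proof -
  have Xp: "\<Delta> (X_op ^ e) = 0" for e using der_op_pow[OF D rep_alg_X, of e] X0 by simp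
  have Yp: "\<Delta> (Y_op N ^ d) = 0" for d using der_op_pow[OF D rep_alg_Y, of d] Y0 by simp
  have M: "\<Delta> (mono_op N z) = 0" for z
    using is_der_opD(3)[OF D rep_alg_pow[OF rep_alg_X] rep_alg_pow[OF rep_alg_Y]] Xp Yp by (simp add: mono_op_def)
  obtain F where F: "finite F" "T = (\<Sum>z\<in>F. scal_op (nf T z) * mono_op N z)" using rep_alg_expandE[OF N T] by blast
  have "\<Delta> T = (\<Sum>z\<in>F. \<Delta> (scal_op (nf T z) * mono_op N z))"
    by (subst F(2), rule der_op_sum[OF D]) (simp add: rep_alg_mult rep_alg_scal_op rep_alg_mono_op)
  also have "\<dots> = 0" by (simp add: is_der_opD(4)[OF D rep_alg_mono_op] M)
  finally show ?thesis .
qed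

lemma is_der_op_ad: assumes A: "A \<in> rep_alg N" shows "is_der_op N (\<lambda>T. A * T - T * A)"
  unfolding is_der_op_def
  by (auto simp: rep_alg_diff rep_alg_mult A algebra_simps) (metis mult.assoc scal_op_comm)+

lemma is_der_op_diff: "is_der_op N D1 \<Longrightarrow> is_der_op N D2 \<Longrightarrow> is_der_op N (\<lambda>T. D1 T - D2 T)"
  unfolding is_der_op_def by (auto simp: rep_alg_diff algebra_simps)

lemma is_der_op_scale: "is_der_op N D1 \<Longrightarrow> is_der_op N (\<lambda>T. scal_op a * D1 T)"
  unfolding is_der_op_def
  by (auto simp: rep_alg_mult rep_alg_scal_op algebra_simps) (metis mult.assoc scal_op_comm, metis mult.assoc scal_op_comm scal_op_mult mult.commute)

lemma homog_op_der_op_mult: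
  assumes N: "N \<ge> 1" and D: "is_der_op N \<Delta>"
    and S: "S \<in> rep_alg N" "homog_op N p S" "homog_op N (p + l) (\<Delta> S)"
    and T: "T \<in> rep_alg N" "homog_op N q T" "homog_op N (q + l) (\<Delta> T)"
  shows "homog_op N (p + q + l) (\<Delta> (S * T))"
proof -
  have "homog_op N (p + q + l) (\<Delta> S * T)"
    using homog_op_mult[OF N is_der_opD(1)[OF D S(1)] S(3) T(2)] by (simp add: ac_simps)
  moreover have "homog_op N (p + q + l) (S * \<Delta> T)"
    using homog_op_mult[OF N S(1,2) T(3)] by (simp add: ac_simps)
  ultimately show ?thesis by (simp add: is_der_opD(3)[OF D S(1) T(1)] homog_op_add)
qed

lemma homog_op_der_op_pow:
  assumes N: "N \<ge> 1" and D: "is_der_op N \<Delta>"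
    and S: "S \<in> rep_alg N" "homog_op N p S" "homog_op N (p + l) (\<Delta> S)"
  shows "homog_op N (e * p + l) (\<Delta> (S ^ e))"
proof (induction e)
  case 0 thus ?case using der_op_pow[OF D S(1), of 0] by (simp add: homog_op_zero)
next
  case (Suc e)
  have "homog_op N (e * p) (S ^ e)"
  proof (induction e)
    case 0 thus ?case using homog_op_mono_op[of N "(0, 0)"] by (simp add: mono_op_def mdeg_def)
  next
    case (Suc e) thus ?case using homog_op_mult[OF N S(1,2) Suc] by simp
  qed
  thus ?case using homog_op_der_op_mult[OF N D S rep_alg_pow[OF S(1)] _ Suc] by (simp add: ac_simps)
qed

lemma homog_op_der_op:
  assumes N: "N \<ge> 1" and D: "is_der_op N \<Delta>"
    and hX: "homog_op N (Suc l) (\<Delta> X_op)" and hY: "homog_op N (l + (N - 1)) (\<Delta> (Y_op N))"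
    and T: "T \<in> rep_alg N" and hT: "homog_op N p T"
  shows "homog_op N (p + l) (\<Delta> T)"
proof -
  have Xp: "homog_op N (e * 1 + l) (\<Delta> (X_op ^ e))" for e
    by (rule homog_op_der_op_pow[OF N D rep_alg_X homog_op_X]) (use hX in simp)
  have Yp: "homog_op N (d * (N - 1) + l) (\<Delta> (Y_op N ^ d))" for d
    by (rule homog_op_der_op_pow[OF N D rep_alg_Y homog_op_Y]) (use hY in \<open>simp add: add.commute\<close>)
  have M: "homog_op N (mdeg N z + l) (\<Delta> (mono_op N z))" for z
    using homog_op_der_op_mult[OF N D rep_alg_pow[OF rep_alg_X] homog_op_Xpow[of N "fst z"] _
        rep_alg_pow[OF rep_alg_Y] homog_op_Ypow[of N "snd z"]] Xp[of "fst z"] Yp[of "snd z"]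
    by (simp add: mono_op_def mdeg_def ac_simps)
  obtain F where F: "finite F" "T = (\<Sum>z\<in>F. scal_op (nf T z) * mono_op N z)" using rep_alg_expandE[OF N T] by blast
  have "\<Delta> T = (\<Sum>z\<in>F. scal_op (nf T z) * \<Delta> (mono_op N z))"
    by (subst F(2), subst der_op_sum[OF D]) (simp_all add: rep_alg_mult rep_alg_scal_op rep_alg_mono_op is_der_opD(4)[OF D rep_alg_mono_op])
  also have "homog_op N (p + l) \<dots>"
  proof (rule homog_op_sum)
    fix z assume "z \<in> F"
    show "homog_op N (p + l) (scal_op (nf T z) * \<Delta> (mono_op N z))"
    proof (cases "nf T z = 0")
      case True thus ?thesis by (simp add: scal_op_zero homog_op_zero)
    next
      case False
      hence "mdeg N z = p" using hT unfolding homog_op_def homog_fun_def by blast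
      thus ?thesis using homog_op_scal_op[OF M[of z]] by simp
    qed
  qed
  finally show ?thesis .
qed

lemma degree_split_cases:
  fixes K i j a b :: nat
  assumes K: "K \<ge> 1" and i: "1 \<le> i" "i \<le> K" and a: "a \<le> K" and e: "a + K * b = i + K * j"
  shows "(a = i \<and> b = j) \<or> (a = 0 \<and> b = Suc j)"
proof (cases "b \<le> j")
  case True
  show ?thesis
  proof (cases "b < j")
    case True
    hence "K * Suc b \<le> K * j" by (intro mult_le_mono2) simp
    hence "K * b + K \<le> K * j" by simp
    thus ?thesis using e a i by linarith
  next
    case False
    hence "b = j" using True by simp
    thus ?thesis using e by simp
  qed
next
  case False
  show ?thesis
  proof (cases "b = Suc j")
    case True
    thus ?thesis using e i by simp
  next
    case F2: False
    hence "Suc (Suc j) \<le> b" using False by simp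
    hence "K * Suc (Suc j) \<le> K * b" by (intro mult_le_mono2)
    hence "K * j + K + K \<le> K * b" by simp
    thus ?thesis using e a i K by linarith
  qed
qed

lemma low_x_degree_decomposition:
  assumes N2: "N \<ge> 2" and lij: "l + 1 = i + j * (N - 1)" and i1: "1 \<le> i" and iN: "i \<le> N - 1"
    and LA: "L \<in> rep_alg N" and sL: "supp_in (\<lambda>z. mdeg N z = Suc l \<and> fst z < N) L"
  shows "L = scal_op (nf L (i, j)) * mono_op N (i, j) + scal_op (nf L (0, Suc j)) * mono_op N (0, Suc j)"
proof (rule rep_alg_eqI[OF _ LA])
  show N: "N \<ge> 1" using N2 by simp
  obtain K where K: "N = Suc K" using N by (cases N) auto
  have K1: "K \<ge> 1" using N2 K by simp
  have cases: "z = (i, j) \<or> z = (0, Suc j)" if "mdeg N z = Suc l" "fst z < N" for z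
  proof -
    have "fst z + K * snd z = i + K * j" using that lij by (simp add: mdeg_def K algebra_simps)
    moreover have "fst z \<le> K" using that K by simp
    ultimately show ?thesis using degree_split_cases[OF K1 i1 _ _] iN K by (cases z) auto
  qed
  show "scal_op (nf L (i, j)) * mono_op N (i, j) + scal_op (nf L (0, Suc j)) * mono_op N (0, Suc j) \<in> rep_alg N"
    by (simp add: rep_alg_add rep_alg_mult rep_alg_scal_op rep_alg_mono_op)
  show "nf L = nf (scal_op (nf L (i, j)) * mono_op N (i, j) + scal_op (nf L (0, Suc j)) * mono_op N (0, Suc j))"
  proof
    fix z :: "nat \<times> nat"
    show "nf L z = nf (scal_op (nf L (i, j)) * mono_op N (i, j) + scal_op (nf L (0, Suc j)) * mono_op N (0, Suc j)) z"
    proof (cases "z = (i, j) \<or> z = (0, Suc j)")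
      case True thus ?thesis using i1 by (auto simp: nf_add nf_scal_op nf_mono_op delta_def)
    next
      case False
      hence "nf L z = 0" using sL cases unfolding supp_in_def by blast
      thus ?thesis using False by (auto simp: nf_add nf_scal_op nf_mono_op delta_def)
    qed
  qed
qed

lemma der_op_relation:
  assumes N: "N \<ge> 1" and E: "is_der_op N E"
  shows "E (Y_op N) * X_op + Y_op N * E X_op - (E X_op * Y_op N + X_op * E (Y_op N))
     = (\<Sum>k<N. X_op ^ k * E X_op * X_op ^ (N - 1 - k))"
proof -
  have "E (Y_op N * X_op - X_op * Y_op N)
      = E (Y_op N) * X_op + Y_op N * E X_op - (E X_op * Y_op N + X_op * E (Y_op N))"
    by (simp add: der_op_diff[OF E] rep_alg_mult rep_alg_X rep_alg_Y
        is_der_opD(3)[OF E rep_alg_Y rep_alg_X] is_der_opD(3)[OF E rep_alg_X rep_alg_Y])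
  thus ?thesis by (simp add: Y_X_relation[OF N] der_op_pow[OF E rep_alg_X])
qed

text \<open>Applying E to the relation gives ad_X (E Y) = N \<beta> X^(N-1) Y^m + \<dots>; the left-hand side
  lives in x-degrees \<ge> N, whereas the coefficient of X^(N-1) Y^m on the right is N \<beta>.\<close>
lemma der_op_X_Ypow_eq_zero:
  fixes E :: "'k::field_char_0 lin_op \<Rightarrow> 'k lin_op"
  assumes N: "N \<ge> 1" and E: "is_der_op N E" and EX: "E X_op = scal_op \<beta> * Y_op N ^ m"
  shows "\<beta> = 0"
proof -
  have "Y_op N * (scal_op \<beta> * Y_op N ^ m) = scal_op \<beta> * Y_op N ^ m * Y_op N"
    by (simp add: mult.assoc power_commutes) (metis mult.assoc scal_op_comm power_Suc power_Suc2)
  hence "ad_X (E (Y_op N)) = (\<Sum>k<N. X_op ^ k * E X_op * X_op ^ (N - 1 - k))"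
    using der_op_relation[OF N E] EX by (simp add: ad_X_def algebra_simps)
  moreover have "nf (ad_X (E (Y_op N))) (N - 1, m) = 0"
    using supp_ad_X_fst[OF N is_der_opD(1)[OF E rep_alg_Y]] N unfolding ad_X_def supp_in_def by auto
  moreover have "nf (X_op ^ k * E X_op * X_op ^ (N - 1 - k)) (N - 1, m) = \<beta>" if "k < N" for k
  proof -
    have "X_op ^ k * E X_op * X_op ^ (N - 1 - k) = scal_op \<beta> * (X_op ^ k * Y_op N ^ m * X_op ^ (N - 1 - k))"
      by (simp add: EX mult.assoc) (metis mult.assoc scal_op_comm)
    moreover have "nf (X_op ^ k * Y_op N ^ m * X_op ^ (N - 1 - k)) (k + (N - 1 - k), m) = (1::'k)"
      by (rule nf_Xpow_Ypow_Xpow[OF N]) (use that in auto)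
    moreover have "k + (N - 1 - k) = N - 1" using that by simp
    ultimately show ?thesis by (simp add: nf_scal_op)
  qed
  ultimately have "of_nat N * \<beta> = 0" by (simp add: nf_sum)
  thus ?thesis using N by simp
qed

text \<open>If E X = 0 then E Y commutes with X, hence E Y = \<gamma> X^(l+N-1), and this is
  reproduced by the inner derivation of -\<gamma>/l X^l, because [X^l, Y] = -l X^(l+N-1).\<close>
lemma der_op_inner_if_X_zero:
  fixes E :: "'k::field_char_0 lin_op \<Rightarrow> 'k lin_op"
  assumes N: "N \<ge> 1" and l1: "l \<ge> 1" and E: "is_der_op N E" and EX: "E X_op = 0"
    and hEY: "homog_op N (l + (N - 1)) (E (Y_op N))"
  obtains F where "F \<in> rep_alg N" "\<forall>T\<in>rep_alg N. E T = F * T - T * F"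
proof -
  define q where "q = l + (N - 1)"
  define \<gamma> where "\<gamma> = nf (E (Y_op N)) (q, 0)"
  have "ad_X (E (Y_op N)) = 0"
    using der_op_relation[OF N E] by (simp add: EX ad_X_def)
  hence EY: "E (Y_op N) = scal_op \<gamma> * X_op ^ q"
    using ad_X_kernel[OF N is_der_opD(1)[OF E rep_alg_Y]] hEY by (simp add: \<gamma>_def q_def)
  define F where "F = scal_op (- \<gamma> / of_nat l) * X_op ^ l"
  have FA: "F \<in> rep_alg N" by (simp add: F_def rep_alg_mult rep_alg_scal_op rep_alg_pow rep_alg_X)
  define E' where "E' = (\<lambda>T. E T - (F * T - T * F))"
  have E': "is_der_op N E'" unfolding E'_def by (intro is_der_op_diff is_der_op_ad E FA)
  have E'X: "E' X_op = 0"
    by (simp add: E'_def EX F_def mult.assoc power_commutes) (metis mult.assoc scal_op_comm power_Suc power_Suc2)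
  have E'Y: "E' (Y_op N) = 0"
  proof -
    have yx: "Y_op N * X_op ^ l - X_op ^ l * Y_op N = of_nat l * (X_op ^ q :: 'k lin_op)"
      using Y_X_pow_relation[OF N, of l] by (simp add: q_def)
    have "F * Y_op N - Y_op N * F = scal_op (- \<gamma> / of_nat l) * (X_op ^ l * Y_op N - Y_op N * X_op ^ l)"
      by (simp add: F_def algebra_simps mult.assoc) (metis mult.assoc scal_op_comm)
    also have "\<dots> = scal_op (\<gamma> / of_nat l) * (scal_op (of_nat l) * X_op ^ q)"
      using yx by (simp add: algebra_simps scal_op_of_nat scal_op_neg)
    also have "\<dots> = scal_op (\<gamma> / of_nat l * of_nat l) * X_op ^ q"
      by (simp only: scal_op_mult mult.assoc)
    also have "\<gamma> / of_nat l * of_nat l = \<gamma>" using l1 by simp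
    finally show ?thesis by (simp add: E'_def EY)
  qed
  show ?thesis
  proof (rule that[OF FA], intro ballI)
    fix T :: "'k lin_op" assume "T \<in> rep_alg N"
    thus "E T = F * T - T * F" using der_op_zero_if_generators[OF N E' E'X E'Y] by (simp add: E'_def)
  qed
qed

lemma der_op_classification:
  fixes \<Delta> D :: "'k::field_char_0 lin_op \<Rightarrow> 'k lin_op"
  assumes N2: "N \<ge> 2" and l1: "l \<ge> 1" and lij: "l + 1 = i + j * (N - 1)" and i1: "1 \<le> i" and iN: "i \<le> N - 1"
    and \<Delta>: "is_der_op N \<Delta>"
    and h\<Delta>: "\<And>p T. T \<in> rep_alg N \<Longrightarrow> homog_op N p T \<Longrightarrow> homog_op N (p + l) (\<Delta> T)"
    and D: "is_der_op N D" and DX: "D X_op = X_op ^ i * Y_op N ^ j"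
    and hDY: "homog_op N (l + (N - 1)) (D (Y_op N))"
  shows "\<exists>c. \<exists>A\<in>rep_alg N. \<forall>T\<in>rep_alg N. \<Delta> T = scal_op c * D T + (A * T - T * A)"
proof -
  have N: "N \<ge> 1" using N2 by simp
  have \<Delta>XA: "\<Delta> X_op \<in> rep_alg N" by (rule is_der_opD(1)[OF \<Delta> rep_alg_X])
  obtain \<Psi> where \<Psi>: "\<Psi> \<in> rep_alg N" "homog_op N l (\<Psi> * Y_op N)"
      "supp_in (\<lambda>z. mdeg N z = Suc l \<and> fst z < N) (\<Delta> X_op - ad_X (\<Psi> * Y_op N))"
    using ad_X_reduction_homog[OF N \<Delta>XA h\<Delta>[OF rep_alg_X homog_op_X]] by auto
  define W where "W = \<Psi> * Y_op N"
  have WA: "W \<in> rep_alg N" by (simp add: W_def rep_alg_mult \<Psi>(1) rep_alg_Y)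
  define L where "L = \<Delta> X_op - ad_X W"
  have LA: "L \<in> rep_alg N" by (simp add: L_def ad_X_def rep_alg_diff rep_alg_mult \<Delta>XA WA rep_alg_X)
  define \<alpha> where "\<alpha> = nf L (i, j)"
  define \<beta> where "\<beta> = nf L (0, Suc j)"
  have L: "L = scal_op \<alpha> * mono_op N (i, j) + scal_op \<beta> * mono_op N (0, Suc j)"
    unfolding \<alpha>_def \<beta>_def
    by (rule low_x_degree_decomposition[OF N2 lij i1 iN LA]) (use \<Psi>(3) in \<open>simp add: L_def W_def\<close>)
  define E where "E = (\<lambda>T. \<Delta> T - scal_op \<alpha> * D T - (W * T - T * W))"
  have E: "is_der_op N E"
    unfolding E_def by (intro is_der_op_diff is_der_op_scale is_der_op_ad \<Delta> D WA)
  have "E X_op = L - scal_op \<alpha> * mono_op N (i, j)"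
    by (simp add: E_def L_def ad_X_def DX mono_op_def)
  hence EX: "E X_op = scal_op \<beta> * Y_op N ^ Suc j" by (simp add: L mono_op_def)
  hence EX0: "E X_op = 0" using der_op_X_Ypow_eq_zero[OF N E EX] by (simp add: scal_op_zero)
  have hEY: "homog_op N (l + (N - 1)) (E (Y_op N))"
  proof -
    have "homog_op N (l + (N - 1)) (\<Delta> (Y_op N))" using h\<Delta>[OF rep_alg_Y homog_op_Y] by (simp add: add.commute)
    moreover have "homog_op N (l + (N - 1)) (W * Y_op N)"
      using homog_op_mult[OF N WA _ homog_op_Y] \<Psi>(2) by (simp add: W_def)
    moreover have "homog_op N (l + (N - 1)) (Y_op N * W)"
      using homog_op_mult[OF N rep_alg_Y homog_op_Y] \<Psi>(2) by (simp add: W_def add.commute)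
    ultimately show ?thesis unfolding E_def by (intro homog_op_diff homog_op_scal_op hDY)
  qed
  obtain F where F: "F \<in> rep_alg N" "\<forall>T\<in>rep_alg N. E T = F * T - T * F"
    using der_op_inner_if_X_zero[OF N l1 E EX0 hEY] by blast
  show ?thesis
  proof (intro exI[of _ \<alpha>] bexI[of _ "W + F"] ballI)
    show "W + F \<in> rep_alg N" by (simp add: rep_alg_add WA F(1))
    fix T :: "'k lin_op" assume "T \<in> rep_alg N"
    thus "\<Delta> T = scal_op \<alpha> * D T + ((W + F) * T - T * (W + F))"
      using F(2) by (simp add: E_def algebra_simps)
  qed
qed

section \<open>Derivations of A as derivations of the operator algebra\<close>

text \<open>Any representative may be chosen, since is_derA demands compatibility with eqA.\<close>
definition der_op_of :: "nat \<Rightarrow> ('k::comm_ring_1 fa \<Rightarrow> 'k fa) \<Rightarrow> 'k lin_op \<Rightarrow> 'k lin_op" where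
  "der_op_of N E T = rep N (pm_of (E (fa_of (SOME p. rep N p = T))))"

lemma is_derAD:
  assumes "is_derA N E"
  shows "f \<in> fa_carrier \<Longrightarrow> E f \<in> fa_carrier"
    and "f \<in> fa_carrier \<Longrightarrow> g \<in> fa_carrier \<Longrightarrow> eqA N f g \<Longrightarrow> eqA N (E f) (E g)"
    and "f \<in> fa_carrier \<Longrightarrow> g \<in> fa_carrier \<Longrightarrow> eqA N (E (fa_add (fa_smul c f) g)) (fa_add (fa_smul c (E f)) (E g))"
    and "f \<in> fa_carrier \<Longrightarrow> g \<in> fa_carrier \<Longrightarrow> eqA N (E (fa_mul f g)) (fa_add (fa_mul (E f) g) (fa_mul f (E g)))"
  using assms unfolding is_derA_def by blast+

lemma der_op_of_rep:
  assumes N: "N \<ge> 1" and E: "is_derA N E"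
  shows "der_op_of N E (rep N p) = rep N (pm_of (E (fa_of p :: 'k::comm_ring_1 fa)))"
proof -
  define p' where "p' = (SOME p'. rep N p' = rep N p)"
  have "rep N p' = rep N p" unfolding p'_def by (rule someI) (rule refl)
  hence "eqA N (fa_of p') (fa_of p)" using eqA_iff_rep[OF N fa_of_carrier[of p'] fa_of_carrier[of p]] by simp
  hence "eqA N (E (fa_of p')) (E (fa_of p))" using is_derAD(2)[OF E] by simp
  hence "rep N (pm_of (E (fa_of p'))) = rep N (pm_of (E (fa_of p)))"
    using eqA_iff_rep[OF N is_derAD(1)[OF E fa_of_carrier] is_derAD(1)[OF E fa_of_carrier]] by simp
  thus ?thesis by (simp add: der_op_of_def p'_def)
qed

lemma fa_smul_one: "fa_smul 1 f = (f :: 'k::comm_ring_1 fa)" by (simp add: fa_smul_def)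
lemma fa_add_zero: "fa_add f fa_zero = (f :: 'k::comm_ring_1 fa)" by (simp add: fa_add_def fa_zero_def)
lemma fa_zero_carrier: "(fa_zero :: 'k::comm_ring_1 fa) \<in> fa_carrier"
  by (metis fa_of_zero fa_of_carrier)
lemma pm_of_zero: "pm_of (fa_zero :: 'k::comm_ring_1 fa) = 0"
  by (metis fa_of_zero pm_of_fa_of)

lemma rep_derA_lincomb:
  assumes N: "N \<ge> 1" and E: "is_derA N E" and f: "f \<in> fa_carrier" and g: "g \<in> fa_carrier"
  shows "rep N (pm_of (E (fa_add (fa_smul c f) g))) = scal_op c * rep N (pm_of (E f)) + rep N (pm_of (E (g :: 'k::comm_ring_1 fa)))"
proof -
  have "eqA N (E (fa_add (fa_smul c f) g)) (fa_add (fa_smul c (E f)) (E g))" using is_derAD(3)[OF E f g] .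
  moreover have c1: "fa_add (fa_smul c f) g \<in> fa_carrier" by (simp add: fa_carrier_add fa_carrier_smul f g)
  ultimately have "rep N (pm_of (E (fa_add (fa_smul c f) g))) = rep N (pm_of (fa_add (fa_smul c (E f)) (E g)))"
    using eqA_iff_rep[OF N is_derAD(1)[OF E c1]] by (simp add: fa_carrier_add fa_carrier_smul is_derAD(1)[OF E] f g)
  thus ?thesis
    by (simp add: pm_of_add pm_of_smul fa_carrier_smul is_derAD(1)[OF E] f g rep_add rep_mult rep_scal_pm)
qed

lemma rep_derA_zero:
  assumes N: "N \<ge> 1" and E: "is_derA N E"
  shows "rep N (pm_of (E (fa_zero :: 'k::comm_ring_1 fa))) = 0"
proof -
  have "rep N (pm_of (E fa_zero)) = scal_op 1 * rep N (pm_of (E fa_zero)) + rep N (pm_of (E (fa_zero :: 'k fa)))"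
    using rep_derA_lincomb[OF N E fa_zero_carrier fa_zero_carrier, of 1] by (simp add: fa_smul_one fa_add_zero)
  thus ?thesis by (simp add: scal_op_one)
qed

lemma is_der_op_der_op_of:
  assumes N: "N \<ge> 1" and E: "is_derA N (E :: 'k::comm_ring_1 fa \<Rightarrow> 'k fa)"
  shows "is_der_op N (der_op_of N E)"
  unfolding is_der_op_def
proof (intro conjI ballI allI)
  fix T :: "'k lin_op" assume "T \<in> rep_alg N"
  thus "der_op_of N E T \<in> rep_alg N" by (auto simp: rep_alg_def der_op_of_def)
next
  fix S T :: "'k lin_op" assume S: "S \<in> rep_alg N" and T: "T \<in> rep_alg N"
  obtain p q where pq: "S = rep N p" "T = rep N q" using S T by (auto simp: rep_alg_def)
  have "der_op_of N E (S + T) = der_op_of N E (rep N (p + q))" by (simp add: pq rep_add)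
  also have "\<dots> = rep N (pm_of (E (fa_add (fa_smul 1 (fa_of p)) (fa_of q))))"
    by (simp add: der_op_of_rep[OF N E] fa_of_add fa_smul_one)
  also have "\<dots> = der_op_of N E S + der_op_of N E T"
    by (simp add: rep_derA_lincomb[OF N E fa_of_carrier fa_of_carrier] scal_op_one pq der_op_of_rep[OF N E])
  finally show "der_op_of N E (S + T) = der_op_of N E S + der_op_of N E T" .
  have "der_op_of N E (S * T) = rep N (pm_of (E (fa_mul (fa_of p) (fa_of q))))"
    by (simp add: pq rep_mult[symmetric] der_op_of_rep[OF N E] fa_of_mult)
  also have "\<dots> = rep N (pm_of (fa_add (fa_mul (E (fa_of p)) (fa_of q)) (fa_mul (fa_of p) (E (fa_of q)))))"
    using is_derAD(4)[OF E fa_of_carrier fa_of_carrier, of p q]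
      eqA_iff_rep[OF N is_derAD(1)[OF E fa_carrier_mul[OF fa_of_carrier fa_of_carrier]]]
    by (simp add: fa_carrier_add fa_carrier_mul is_derAD(1)[OF E])
  also have "\<dots> = der_op_of N E S * T + S * der_op_of N E T"
    by (simp add: pm_of_add pm_of_mult fa_carrier_mul is_derAD(1)[OF E] rep_add rep_mult pq der_op_of_rep[OF N E])
  finally show "der_op_of N E (S * T) = der_op_of N E S * T + S * der_op_of N E T" .
next
  fix c and T :: "'k lin_op" assume T: "T \<in> rep_alg N"
  obtain q where q: "T = rep N q" using T by (auto simp: rep_alg_def)
  have "scal_op c * T = rep N (scal_pm c * q)" by (simp add: q rep_mult rep_scal_pm)
  hence "der_op_of N E (scal_op c * T) = rep N (pm_of (E (fa_add (fa_smul c (fa_of q)) fa_zero)))"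
    by (simp add: der_op_of_rep[OF N E] fa_of_smul fa_add_zero)
  also have "\<dots> = scal_op c * der_op_of N E T"
    by (simp add: rep_derA_lincomb[OF N E fa_of_carrier fa_zero_carrier] rep_derA_zero[OF N E] q der_op_of_rep[OF N E])
  finally show "der_op_of N E (scal_op c * T) = scal_op c * der_op_of N E T" .
qed

lemma homog_op_der_op_of:
  assumes N: "N \<ge> 1" and E: "is_derA N (E :: 'k::comm_ring_1 fa \<Rightarrow> 'k fa)" and H: "homog_derA N l E"
    and T: "T \<in> rep_alg N" and hT: "homog_op N p T"
  shows "homog_op N (p + l) (der_op_of N E T)"
proof -
  obtain q where q: "T = rep N q" using T by (auto simp: rep_alg_def)
  have "homogA N p (fa_of q)" using homogA_iff_homog_op[OF N fa_of_carrier[of q]] hT q by simp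
  hence "homogA N (p + l) (E (fa_of q))" using H fa_of_carrier unfolding homog_derA_def by blast
  hence "homog_op N (p + l) (rep N (pm_of (E (fa_of q))))" using homogA_iff_homog_op[OF N is_derAD(1)[OF E fa_of_carrier]] by simp
  thus ?thesis by (simp add: q der_op_of_rep[OF N E])
qed

section \<open>Derivations of the free algebra given on the generators\<close>

definition letter_pm :: "bool \<Rightarrow> 'k::comm_ring_1 fpm" where "letter_pm c = (if c then y_pm else x_pm)"
definition word_pm :: "bool list \<Rightarrow> 'k::comm_ring_1 fpm" where "word_pm l = Poly_Mapping.single (Wd l) 1"

lemma one_fpm: "(1 :: 'k::comm_ring_1 fpm) = Poly_Mapping.single 0 1"
  by (simp add: poly_mapping_eqI lookup_one lookup_single)

lemma word_pm_Nil: "word_pm [] = 1" by (simp add: word_pm_def one_fpm zero_Wd)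
lemma word_pm_append: "word_pm (l1 @ l2) = word_pm l1 * (word_pm l2 :: 'k::comm_ring_1 fpm)"
  by (simp add: word_pm_def mult_single)
lemma word_pm_Cons: "word_pm (c # l) = letter_pm c * (word_pm l :: 'k::comm_ring_1 fpm)"
  by (cases c) (simp_all add: letter_pm_def word_pm_def x_pm_def y_pm_def mult_single)

fun der_word :: "'k::comm_ring_1 fpm \<Rightarrow> 'k fpm \<Rightarrow> bool list \<Rightarrow> 'k fpm" where
  "der_word a b [] = 0"
| "der_word a b (c # l) = (if c then b else a) * word_pm l + letter_pm c * der_word a b l"

lemma der_word_append: "der_word a b (l1 @ l2) = der_word a b l1 * word_pm l2 + word_pm l1 * der_word a b l2"
  by (induction l1) (simp_all add: word_pm_Nil word_pm_append word_pm_Cons algebra_simps)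

definition der_pm :: "'k::comm_ring_1 fpm \<Rightarrow> 'k fpm \<Rightarrow> 'k fpm \<Rightarrow> 'k fpm" where
  "der_pm a b p = (\<Sum>w\<in>Poly_Mapping.keys p. scal_pm (Poly_Mapping.lookup p w) * der_word a b (letters w))"

lemma der_pm_superset:
  assumes "finite S" "Poly_Mapping.keys p \<subseteq> S"
  shows "der_pm a b p = (\<Sum>w\<in>S. scal_pm (Poly_Mapping.lookup p w) * der_word a b (letters w))"
  unfolding der_pm_def
  by (rule sum.mono_neutral_left[OF assms(1) assms(2)]) (simp add: in_keys_iff scal_pm_zero)

lemma der_pm_add: "der_pm a b (p + q) = der_pm a b p + der_pm a b q"
proof -
  let ?S = "Poly_Mapping.keys p \<union> Poly_Mapping.keys q"
  have "der_pm a b (p + q) = (\<Sum>w\<in>?S. scal_pm (Poly_Mapping.lookup (p+q) w) * der_word a b (letters w))"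
    by (rule der_pm_superset) (simp_all add: keys_add[of p q])
  also have "\<dots> = (\<Sum>w\<in>?S. scal_pm (Poly_Mapping.lookup p w) * der_word a b (letters w)) +
                  (\<Sum>w\<in>?S. scal_pm (Poly_Mapping.lookup q w) * der_word a b (letters w))"
    by (simp add: lookup_add scal_pm_add distrib_right sum.distrib)
  also have "\<dots> = der_pm a b p + der_pm a b q"
    by (simp add: der_pm_superset[symmetric])
  finally show ?thesis .
qed

lemma der_pm_zero: "der_pm a b 0 = 0" by (simp add: der_pm_def)

lemma der_pm_sum: "der_pm a b (sum f A) = (\<Sum>x\<in>A. der_pm a b (f x))"
  by (induction A rule: infinite_finite_induct) (simp_all add: der_pm_zero der_pm_add)

lemma der_pm_single: "der_pm a b (Poly_Mapping.single w c) = scal_pm c * der_word a b (letters w)"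
proof -
  have "der_pm a b (Poly_Mapping.single w c) = (\<Sum>w'\<in>{w}. scal_pm (Poly_Mapping.lookup (Poly_Mapping.single w c) w') * der_word a b (letters w'))"
    by (rule der_pm_superset) auto
  thus ?thesis by simp
qed

lemma lookup_scal_pm_mult: "Poly_Mapping.lookup (scal_pm c * p) w = c * Poly_Mapping.lookup p w"
  using fun_cong[OF fa_of_smul[of c p], of "letters w"] by (simp add: fa_of_def fa_smul_def)

lemma der_pm_smul: "der_pm a b (scal_pm c * p) = scal_pm c * der_pm a b p"
proof -
  have "der_pm a b (scal_pm c * p) = (\<Sum>w\<in>Poly_Mapping.keys p. scal_pm (Poly_Mapping.lookup (scal_pm c * p) w) * der_word a b (letters w))"
    by (rule der_pm_superset) (auto simp: in_keys_iff lookup_scal_pm_mult)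
  thus ?thesis by (simp add: der_pm_def lookup_scal_pm_mult scal_pm_mult sum_distrib_left mult.assoc)
qed

lemma scal_pm_neg1: "scal_pm (-1) * p = - (p :: 'k::comm_ring_1 fpm)"
proof -
  have "scal_pm (-1) = (-1 :: 'k fpm)" by (simp add: scal_pm_def single_uminus)
  thus ?thesis by simp
qed

lemma der_pm_neg: "der_pm a b (- p) = - der_pm a b p"
  using der_pm_smul[of a b "-1" p] by (simp add: scal_pm_neg1)
lemma der_pm_diff: "der_pm a b (p - q) = der_pm a b p - der_pm a b q"
proof -
  have "der_pm a b (p - q) = der_pm a b (p + - q)" by simp
  also have "\<dots> = der_pm a b p + - der_pm a b q" by (simp only: der_pm_add der_pm_neg)
  finally show ?thesis by simp
qed

lemma single_eq_scal_word: "Poly_Mapping.single w c = scal_pm c * (word_pm (letters w) :: 'k::comm_ring_1 fpm)"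
  by (simp add: scal_pm_def word_pm_def mult_single)

lemma der_pm_word_pm: "der_pm a b (word_pm l) = der_word a b l"
  by (simp add: word_pm_def der_pm_single scal_pm_one)

lemma der_pm_mult: "der_pm a b (p * q) = der_pm a b p * q + p * der_pm a b q"
proof -
  let ?sp = "\<lambda>x. Poly_Mapping.single x (Poly_Mapping.lookup p x)"
  let ?sq = "\<lambda>y. Poly_Mapping.single y (Poly_Mapping.lookup q y)"
  have 2: "der_pm a b (?sp x * ?sq y) = der_pm a b (?sp x) * ?sq y + ?sp x * der_pm a b (?sq y)" for x y
  proof -
    define \<alpha> where "\<alpha> = Poly_Mapping.lookup p x"
    define \<beta> where "\<beta> = Poly_Mapping.lookup q y"
    let ?Dx = "der_word a b (letters x)" and ?Dy = "der_word a b (letters y)" and ?wx = "word_pm (letters x)" and ?wy = "word_pm (letters y)"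
    have "der_pm a b (?sp x * ?sq y) = scal_pm (\<alpha> * \<beta>) * (?Dx * ?wy + ?wx * ?Dy)"
      by (simp add: mult_single der_pm_single der_word_append plus_word_def \<alpha>_def \<beta>_def)
    also have "\<dots> = (scal_pm \<alpha> * ?Dx) * (scal_pm \<beta> * ?wy) + (scal_pm \<alpha> * ?wx) * (scal_pm \<beta> * ?Dy)"
    proof -
      have e1: "?Dx * (scal_pm \<beta> * ?wy) = scal_pm \<beta> * (?Dx * ?wy)" by (metis mult.assoc scal_pm_comm)
      have e2: "?wx * (scal_pm \<beta> * ?Dy) = scal_pm \<beta> * (?wx * ?Dy)" by (metis mult.assoc scal_pm_comm)
      show ?thesis by (simp add: mult.assoc e1 e2 scal_pm_mult distrib_left)
    qed
    finally have c: "der_pm a b (?sp x * ?sq y) = (scal_pm \<alpha> * ?Dx) * (scal_pm \<beta> * ?wy) + (scal_pm \<alpha> * ?wx) * (scal_pm \<beta> * ?Dy)" .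
    have s1: "?sp x = scal_pm \<alpha> * ?wx" by (simp add: single_eq_scal_word \<alpha>_def)
    have s2: "?sq y = scal_pm \<beta> * ?wy" by (simp add: single_eq_scal_word \<beta>_def)
    have r: "der_pm a b (?sp x) * ?sq y + ?sp x * der_pm a b (?sq y) = (scal_pm \<alpha> * ?Dx) * (scal_pm \<beta> * ?wy) + (scal_pm \<alpha> * ?wx) * (scal_pm \<beta> * ?Dy)"
      by (simp only: s1 s2 der_pm_smul der_pm_word_pm)
    show ?thesis using c r by simp
  qed
  have "der_pm a b (p * q) = der_pm a b ((\<Sum>x\<in>Poly_Mapping.keys p. ?sp x) * (\<Sum>y\<in>Poly_Mapping.keys q. ?sq y))"
    by (simp flip: poly_mapping_sum_single)
  also have "\<dots> = (\<Sum>x\<in>Poly_Mapping.keys p. \<Sum>y\<in>Poly_Mapping.keys q. der_pm a b (?sp x * ?sq y))"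
    by (simp only: sum_distrib_left sum_distrib_right der_pm_sum) (rule sum.swap)
  also have "\<dots> = (\<Sum>x\<in>Poly_Mapping.keys p. \<Sum>y\<in>Poly_Mapping.keys q. der_pm a b (?sp x) * ?sq y + ?sp x * der_pm a b (?sq y))"
    by (simp only: 2)
  also have "\<dots> = der_pm a b (\<Sum>x\<in>Poly_Mapping.keys p. ?sp x) * (\<Sum>y\<in>Poly_Mapping.keys q. ?sq y)
       + (\<Sum>x\<in>Poly_Mapping.keys p. ?sp x) * der_pm a b (\<Sum>y\<in>Poly_Mapping.keys q. ?sq y)"
    by (simp add: der_pm_sum sum_distrib_left sum_distrib_right sum.distrib sum.swap[where A="Poly_Mapping.keys p"])
  also have "\<dots> = der_pm a b p * q + p * der_pm a b q" by (simp flip: poly_mapping_sum_single)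
  finally show ?thesis .
qed

lemma der_pm_x_pm: "der_pm a b x_pm = a"
  by (simp add: x_pm_def der_pm_single scal_pm_one word_pm_Nil)
lemma der_pm_y_pm: "der_pm a b y_pm = b"
  by (simp add: y_pm_def der_pm_single scal_pm_one word_pm_Nil)
lemma der_pm_one: "der_pm a b 1 = 0"
  by (simp add: one_fpm der_pm_single zero_Wd)

lemma der_pm_pow: "der_pm a b (p ^ n) = (\<Sum>k<n. p ^ k * der_pm a b p * p ^ (n - 1 - k))"
proof (induction n)
  case 0 thus ?case by (simp add: der_pm_one)
next
  case (Suc n)
  have "der_pm a b (p ^ Suc n) = der_pm a b p * p ^ n + p * der_pm a b (p ^ n)" by (simp add: der_pm_mult)
  also have "\<dots> = der_pm a b p * p ^ n + (\<Sum>k<n. p ^ Suc k * der_pm a b p * p ^ (n - Suc k))"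
    by (simp add: Suc sum_distrib_left mult.assoc)
  also have "\<dots> = (\<Sum>k<Suc n. p ^ k * der_pm a b p * p ^ (Suc n - 1 - k))"
    by (simp add: sum.lessThan_Suc_shift del: sum.lessThan_Suc)
  finally show ?case .
qed

lemma der_pm_rel_ideal:
  assumes R: "der_pm a b (relator_pm N) \<in> ideal_pm N"
  shows "f \<in> rel_ideal N \<Longrightarrow> der_pm a b (pm_of (f :: 'k::comm_ring_1 fa)) \<in> ideal_pm N"
proof (induction rule: rel_ideal.induct)
  case gen thus ?case using R by (metis fa_of_relator_pm pm_of_fa_of)
next
  case zero thus ?case by (simp add: pm_of_zero der_pm_zero ideal_pm_zero)
next
  case (add f g) thus ?case by (simp add: pm_of_add rel_ideal_carrier der_pm_add ideal_pm_add)
next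
  case (mult_left f u)
  have "pm_of f \<in> ideal_pm N" using mult_left(1) rel_ideal_carrier[OF mult_left(1)] by (simp add: ideal_pm_def)
  thus ?case using mult_left
    by (simp add: pm_of_mult rel_ideal_carrier der_pm_mult ideal_pm_add ideal_pm_multL ideal_pm_multR)
next
  case (mult_right f u)
  have "pm_of f \<in> ideal_pm N" using mult_right(1) rel_ideal_carrier[OF mult_right(1)] by (simp add: ideal_pm_def)
  thus ?case using mult_right
    by (simp add: pm_of_mult rel_ideal_carrier der_pm_mult ideal_pm_add ideal_pm_multL ideal_pm_multR)
qed

definition der_fa :: "'k::comm_ring_1 fpm \<Rightarrow> 'k fpm \<Rightarrow> 'k fa \<Rightarrow> 'k fa" where
  "der_fa a b f = fa_of (der_pm a b (pm_of f))"

lemma eqA_refl: "eqA N f (f :: 'k::comm_ring_1 fa)"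
proof -
  have "fa_sub f f = fa_zero" by (simp add: fa_sub_def fa_zero_def)
  thus ?thesis by (simp add: eqA_def rel_ideal.zero)
qed

lemma is_derA_der_fa:
  assumes R: "der_pm a b (relator_pm N) \<in> ideal_pm N"
  shows "is_derA N (der_fa a b :: 'k::comm_ring_1 fa \<Rightarrow> 'k fa)"
  unfolding is_derA_def
proof (intro conjI ballI allI impI)
  fix f :: "'k fa" assume "f \<in> fa_carrier"
  show "der_fa a b f \<in> fa_carrier" by (simp add: der_fa_def)
next
  fix f g :: "'k fa" assume f: "f \<in> fa_carrier" and g: "g \<in> fa_carrier" and e: "eqA N f g"
  have "pm_of f - pm_of g \<in> ideal_pm N" using e f g eqA_iff_ideal_pm by blast
  hence "der_pm a b (pm_of f - pm_of g) \<in> ideal_pm N"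
    using der_pm_rel_ideal[OF R, of "fa_of (pm_of f - pm_of g)"] by (simp add: ideal_pm_def)
  thus "eqA N (der_fa a b f) (der_fa a b g)"
    by (simp add: eqA_iff_ideal_pm der_fa_def der_pm_diff)
next
  fix c and f g :: "'k fa" assume f: "f \<in> fa_carrier" and g: "g \<in> fa_carrier"
  have "der_fa a b (fa_add (fa_smul c f) g) = fa_add (fa_smul c (der_fa a b f)) (der_fa a b g)"
    by (simp add: der_fa_def pm_of_add pm_of_smul fa_carrier_smul f g der_pm_add der_pm_smul fa_of_add fa_of_smul)
  thus "eqA N (der_fa a b (fa_add (fa_smul c f) g)) (fa_add (fa_smul c (der_fa a b f)) (der_fa a b g))"
    by (simp add: eqA_refl)
next
  fix f g :: "'k fa" assume f: "f \<in> fa_carrier" and g: "g \<in> fa_carrier"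
  have "der_fa a b (fa_mul f g) = fa_add (fa_mul (der_fa a b f) g) (fa_mul f (der_fa a b g))"
    by (simp add: der_fa_def pm_of_mult f g der_pm_mult fa_of_add fa_of_mult)
  thus "eqA N (der_fa a b (fa_mul f g)) (fa_add (fa_mul (der_fa a b f) g) (fa_mul f (der_fa a b g)))"
    by (simp add: eqA_refl)
qed

section \<open>The derivation \<partial>_l\<close>

text \<open>x^N y^(k-1) has x-degree \<ge> N, so the reduction modulo commutators leaves no remainder
  and exhibits it as [\<Psi> y, x]; then \<Phi>_k = \<Psi> y.\<close>
lemma is_Phi_exists:
  assumes N: "N \<ge> 1" and k: "k \<ge> 1"
  shows "\<exists>f. is_Phi N k (f :: 'k::field_char_0 fa)"
proof -
  obtain K where K: "N = Suc K" using N by (cases N) auto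
  define p where "p = N + (k - 1) * (N - 1)"
  define T where "T = (mono_op N (N, k - 1) :: 'k lin_op)"
  have TA: "T \<in> rep_alg N" by (simp add: T_def rep_alg_mono_op)
  have sT: "supp_in (\<lambda>z. mdeg N z = p \<and> snd z < k) T"
    unfolding T_def by (rule supp_in_mono_op) (use k in \<open>simp add: p_def mdeg_def mult.commute\<close>)
  obtain \<Psi> where P: "\<Psi> \<in> rep_alg N" "homog_op N (p - 1) (\<Psi> * Y_op N)"
     "supp_in (\<lambda>z. mdeg N z = p \<and> fst z < N) (T - ad_X (\<Psi> * Y_op N))"
    using ad_X_reduction[OF N TA sT] by blast
  have PYA: "\<Psi> * Y_op N \<in> rep_alg N" by (simp add: rep_alg_mult P(1) rep_alg_Y)
  have "supp_in (\<lambda>z. N \<le> fst z) (T - ad_X (\<Psi> * Y_op N))"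
    unfolding ad_X_def
    by (rule supp_in_diff, unfold T_def, rule supp_in_mono_op, simp, rule supp_ad_X_fst[OF N PYA])
  hence "supp_in (\<lambda>z. False) (T - ad_X (\<Psi> * Y_op N))"
    using P(3) unfolding supp_in_def by (metis not_less)
  hence "T - ad_X (\<Psi> * Y_op N) = 0"
    by (rule rep_alg_eq_zeroI[OF N, rotated]) (simp add: rep_alg_diff TA ad_X_def rep_alg_mult PYA rep_alg_X)
  hence cmT: "ad_X (\<Psi> * Y_op N) = T" by simp
  obtain g0 where g0: "\<Psi> = rep N g0" using P(1) by (auto simp: rep_alg_def)
  define f where "f = fa_of (g0 * y_pm)"
  have "is_Phi N k f"
    unfolding is_Phi_def
  proof (intro conjI)
    show "f \<in> fa_carrier" by (simp add: f_def)
    show "\<exists>g\<in>fa_carrier. eqA N f (fa_mul g fa_y)"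
      by (intro bexI[of _ "fa_of g0"]) (simp_all add: f_def fa_of_mult fa_of_y_pm eqA_refl)
    have "p - 1 = k * (N - 1)" using k by (simp add: p_def K algebra_simps)
    thus "homogA N (k * (N - 1)) f"
      using P(2) by (simp add: homogA_iff_homog_op[OF N] f_def g0 rep_mult rep_y_pm)
    have l: "fa_sub (fa_mul f fa_x) (fa_mul fa_x f) = fa_of (g0 * y_pm * x_pm - x_pm * (g0 * y_pm))"
      by (simp add: f_def fa_of_mult fa_of_diff fa_of_x_pm)
    have r: "fa_mul (fa_pow fa_x N) (fa_pow fa_y (k - 1)) = fa_of (x_pm ^ N * y_pm ^ (k - 1))"
      by (simp add: fa_of_mult fa_of_power fa_of_x_pm fa_of_y_pm)
    show "eqA N (fa_sub (fa_mul f fa_x) (fa_mul fa_x f)) (fa_mul (fa_pow fa_x N) (fa_pow fa_y (k - 1)))"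
      unfolding l r using cmT
      by (simp add: eqA_iff_rep[OF N fa_of_carrier fa_of_carrier] rep_mult rep_diff rep_x_pm rep_y_pm rep_power g0
           ad_X_def T_def mono_op_def)
  qed
  thus ?thesis by blast
qed

lemma is_Phi_Phi: assumes "N \<ge> 1" "k \<ge> 1" shows "is_Phi N k (Phi N k :: 'k::field_char_0 fa)"
  using is_Phi_exists[OF assms] unfolding Phi_def by (rule someI_ex)

lemma sum_conjugates_telescope:
  fixes x w :: "'a::ring_1"
  shows "(\<Sum>k<Suc K. x ^ k * w * x ^ (K - k)) = of_nat (Suc K) * (x ^ K * w)
     + ((\<Sum>s<K. of_nat (Suc s) * (x ^ s * w * x ^ (K - 1 - s))) * x
        - x * (\<Sum>s<K. of_nat (Suc s) * (x ^ s * w * x ^ (K - 1 - s))))"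
proof -
  define f where "f s = x ^ s * w * x ^ (K - s)" for s
  define g where "g s = of_nat s * f s" for s
  have Sx: "(\<Sum>s<K. of_nat (Suc s) * (x ^ s * w * x ^ (K - 1 - s))) * x = (\<Sum>s<K. of_nat (Suc s) * f s)"
    unfolding sum_distrib_right
  proof (rule sum.cong[OF refl])
    fix s assume "s \<in> {..<K}"
    hence "K - s = Suc (K - 1 - s)" by auto
    thus "of_nat (Suc s) * (x ^ s * w * x ^ (K - 1 - s)) * x = of_nat (Suc s) * f s"
      by (simp add: f_def mult.assoc power_commutes del: of_nat_Suc)
  qed
  have xS: "x * (\<Sum>s<K. of_nat (Suc s) * (x ^ s * w * x ^ (K - 1 - s))) = (\<Sum>s<K. of_nat (Suc s) * f (Suc s))"
    unfolding sum_distrib_left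
  proof (rule sum.cong[OF refl])
    fix s assume "s \<in> {..<K}"
    hence "K - 1 - s = K - Suc s" by auto
    thus "x * (of_nat (Suc s) * (x ^ s * w * x ^ (K - 1 - s))) = of_nat (Suc s) * f (Suc s)"
      by (simp add: f_def mult_of_nat_left mult.assoc del: of_nat_Suc)
  qed
  have tm: "of_nat (Suc s) * f s - of_nat (Suc s) * f (Suc s) = f s + (g s - g (Suc s))" for s
    by (simp add: g_def algebra_simps)
  have tele: "(\<Sum>s<K. of_nat (Suc s) * f s) - (\<Sum>s<K. of_nat (Suc s) * f (Suc s)) = (\<Sum>s<K. f s) - of_nat K * f K"
  proof -
    have "(\<Sum>s<K. of_nat (Suc s) * f s) - (\<Sum>s<K. of_nat (Suc s) * f (Suc s))
        = (\<Sum>s<K. of_nat (Suc s) * f s - of_nat (Suc s) * f (Suc s))"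
      by (simp add: sum_subtractf)
    also have "\<dots> = (\<Sum>s<K. f s) + (\<Sum>s<K. g s - g (Suc s))"
      by (simp only: tm sum.distrib)
    also have "\<dots> = (\<Sum>s<K. f s) - of_nat K * f K"
      by (simp only: sum_lessThan_telescope') (simp add: g_def)
    finally show ?thesis .
  qed
  have T: "(\<Sum>k<Suc K. x ^ k * w * x ^ (K - k)) = (\<Sum>s<K. f s) + f K"
    by (simp add: f_def)
  have fK: "f K = x ^ K * w" by (simp add: f_def)
  show ?thesis unfolding Sx xS T
    using tele fK by (simp add: algebra_simps of_nat_Suc)
qed

lemma der_relator_identity_general:
  fixes x y P S :: "'a::ring_1"
  assumes r: "y * x - x * y = x ^ Suc K" and Pr: "P * x - x * P = x ^ Suc K * y ^ j"
    and i1: "1 \<le> i" and iK: "i \<le> Suc K"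
  shows "(x ^ i * S + of_nat (Suc K - i) * (x ^ (i - 1) * P)) * x + y * (x ^ i * y ^ j)
     - (x ^ i * y ^ j * y + x * (x ^ i * S + of_nat (Suc K - i) * (x ^ (i - 1) * P)))
     - x ^ i * (of_nat (Suc K) * (x ^ K * y ^ j) + (S * x - x * S)) = 0"
proof -
  define Z where "Z = x ^ (i + K) * y ^ j"
  have yZ: "y * (x ^ i * y ^ j) - x ^ i * y ^ j * y = of_nat i * Z"
  proof -
    have "y * (x ^ i * y ^ j) - x ^ i * y ^ j * y = (y * x ^ i - x ^ i * y) * y ^ j"
      by (simp add: algebra_simps power_commutes mult.assoc)
    also have "y * x ^ i - x ^ i * y = of_nat i * x ^ (i + K)" by (rule commutator_power[OF r])
    finally show ?thesis by (simp add: Z_def mult.assoc)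
  qed
  have PZ: "x ^ (i - 1) * (P * x - x * P) = Z"
  proof -
    obtain i' where ii: "i = Suc i'" using i1 by (cases i) auto
    have "x ^ i' * x ^ Suc K = x ^ (i' + Suc K)" by (rule power_add[symmetric])
    hence "x ^ (i - 1) * x ^ Suc K = x ^ (i + K)" by (simp add: ii)
    thus ?thesis by (simp add: Pr Z_def mult.assoc[symmetric])
  qed
  have xK: "x ^ i * (of_nat (Suc K) * (x ^ K * y ^ j)) = of_nat (Suc K) * Z"
    by (simp add: mult_of_nat_left Z_def power_add mult.assoc del: of_nat_Suc)
  have comm: "x ^ n * Q * x - x * (x ^ n * Q) = x ^ n * (Q * x - x * Q)" for n and Q :: 'a
    by (simp add: algebra_simps power_commutes flip: mult.assoc)
  have Bx: "(x ^ i * S + of_nat (Suc K - i) * (x ^ (i - 1) * P)) * x - x * (x ^ i * S + of_nat (Suc K - i) * (x ^ (i - 1) * P))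
      = x ^ i * (S * x - x * S) + of_nat (Suc K - i) * Z"
  proof -
    have "x * (of_nat (Suc K - i) * (x ^ (i - 1) * P)) = of_nat (Suc K - i) * (x * (x ^ (i - 1) * P))"
      by (rule mult_of_nat_left)
    hence "(x ^ i * S + of_nat (Suc K - i) * (x ^ (i - 1) * P)) * x - x * (x ^ i * S + of_nat (Suc K - i) * (x ^ (i - 1) * P))
       = (x ^ i * S * x - x * (x ^ i * S)) + of_nat (Suc K - i) * (x ^ (i - 1) * P * x - x * (x ^ (i - 1) * P))"
      unfolding distrib_right distrib_left by (simp add: algebra_simps)
    thus ?thesis unfolding comm PZ .
  qed
  have ofd: "of_nat (Suc K - i) = (of_nat (Suc K) - of_nat i :: 'a)" using iK by (simp add: of_nat_diff)
  have "(x ^ i * S + of_nat (Suc K - i) * (x ^ (i - 1) * P)) * x + y * (x ^ i * y ^ j)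
     - (x ^ i * y ^ j * y + x * (x ^ i * S + of_nat (Suc K - i) * (x ^ (i - 1) * P)))
     - x ^ i * (of_nat (Suc K) * (x ^ K * y ^ j) + (S * x - x * S))
     = ((x ^ i * S + of_nat (Suc K - i) * (x ^ (i - 1) * P)) * x - x * (x ^ i * S + of_nat (Suc K - i) * (x ^ (i - 1) * P)))
       + (y * (x ^ i * y ^ j) - x ^ i * y ^ j * y) - x ^ i * (of_nat (Suc K) * (x ^ K * y ^ j) + (S * x - x * S))"
    by (simp add: algebra_simps)
  also have "\<dots> = 0"
    unfolding Bx yZ unfolding distrib_left[of "x ^ i"] xK ofd by (simp add: algebra_simps)
  finally show ?thesis .
qed

lemma der_relator_identity:
  fixes x y P :: "'a::ring_1"
  assumes r: "y * x - x * y = x ^ Suc K" and Pr: "P * x - x * P = x ^ Suc K * y ^ j"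
    and i1: "1 \<le> i" and iK: "i \<le> Suc K"
  shows "((\<Sum>s<K. of_nat (Suc s) * (x ^ (s + i) * y ^ j * x ^ (K - 1 - s))) + of_nat (Suc K - i) * (x ^ (i - 1) * P)) * x
       + y * (x ^ i * y ^ j)
       - (x ^ i * y ^ j * y + x * ((\<Sum>s<K. of_nat (Suc s) * (x ^ (s + i) * y ^ j * x ^ (K - 1 - s))) + of_nat (Suc K - i) * (x ^ (i - 1) * P)))
       - (\<Sum>k<Suc K. x ^ k * (x ^ i * y ^ j) * x ^ (K - k)) = 0"
proof -
  define S where "S = (\<Sum>s<K. of_nat (Suc s) * (x ^ s * y ^ j * x ^ (K - 1 - s)))"
  define T where "T = (\<Sum>k<Suc K. x ^ k * y ^ j * x ^ (K - k))"
  have xixs: "a * x ^ i * x ^ s = a * x ^ (s + i)" for a s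
    by (simp add: mult.assoc power_add[symmetric] add.commute)
  have B1: "(\<Sum>s<K. of_nat (Suc s) * (x ^ (s + i) * y ^ j * x ^ (K - 1 - s))) = x ^ i * S"
    unfolding S_def sum_distrib_left
    by (rule sum.cong[OF refl]) (simp only: mult_of_nat_left, simp only: mult.assoc[symmetric] xixs)
  have T1: "(\<Sum>k<Suc K. x ^ k * (x ^ i * y ^ j) * x ^ (K - k)) = x ^ i * T"
    unfolding T_def sum_distrib_left
  proof (rule sum.cong[OF refl])
    fix k
    have "x ^ k * x ^ i = x ^ i * x ^ k" by (simp add: power_add[symmetric] add.commute)
    thus "x ^ k * (x ^ i * y ^ j) * x ^ (K - k) = x ^ i * (x ^ k * y ^ j * x ^ (K - k))"
      by (simp add: mult.assoc[symmetric])
  qed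
  have TS: "T = of_nat (Suc K) * (x ^ K * y ^ j) + (S * x - x * S)"
    unfolding T_def S_def by (rule sum_conjugates_telescope)
  show ?thesis
    unfolding B1 T1 TS by (rule der_relator_identity_general[OF r Pr i1 iK])
qed

lemma fa_of_sum_scal:
  "fa_of (\<Sum>s\<in>A. scal_pm (c s) * m s) = (\<lambda>w. \<Sum>s\<in>A. c s * fa_of (m s :: 'k::comm_ring_1 fpm) w)"
  by (simp add: fa_of_def lookup_sum lookup_scal_pm_mult)

lemma homogA_fa_of_iff:
  "N \<ge> 1 \<Longrightarrow> homogA N p (fa_of q) \<longleftrightarrow> homog_op N p (rep N (q :: 'k::comm_ring_1 fpm))"
  using homogA_iff_homog_op[OF _ fa_of_carrier] by simp

lemma homog_derA_of_generators:
  fixes D :: "'k::comm_ring_1 fa \<Rightarrow> 'k fa"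
  assumes N: "N \<ge> 1" and D: "is_derA N D"
    and hx: "homogA N (Suc l) (D fa_x)" and hy: "homogA N (l + (N - 1)) (D fa_y)"
  shows "homog_derA N l D"
  unfolding homog_derA_def
proof (intro allI ballI impI)
  fix p and f :: "'k fa" assume f: "f \<in> fa_carrier" and hf: "homogA N p f"
  have rep_D: "der_op_of N D (rep N q) = rep N (pm_of (D (fa_of q)))" for q
    by (rule der_op_of_rep[OF N D])
  have "homog_op N (Suc l) (der_op_of N D X_op)"
    using hx rep_D[of x_pm] homogA_iff_homog_op[OF N is_derAD(1)[OF D fa_x_carrier]]
    by (simp add: rep_x_pm fa_of_x_pm)
  moreover have "homog_op N (l + (N - 1)) (der_op_of N D (Y_op N))"
    using hy rep_D[of y_pm] homogA_iff_homog_op[OF N is_derAD(1)[OF D fa_y_carrier]]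
    by (simp add: rep_y_pm fa_of_y_pm)
  ultimately have "homog_op N (p + l) (der_op_of N D (rep N (pm_of f)))"
    using homog_op_der_op[OF N is_der_op_der_op_of[OF N D]] hf homogA_iff_homog_op[OF N f] by simp
  thus "homogA N (p + l) (D f)"
    using rep_D[of "pm_of f"] homogA_iff_homog_op[OF N is_derAD(1)[OF D f]] f by simp
qed

lemma derA_classification:
  fixes D E :: "'k::field_char_0 fa \<Rightarrow> 'k fa"
  assumes N2: "N \<ge> 2" and l1: "l \<ge> 1" and lij: "l + 1 = i + j * (N - 1)" and i1: "1 \<le> i" and iN: "i \<le> N - 1"
    and D: "is_derA N D" and hD: "homog_derA N l D"
    and Dx: "eqA N (D fa_x) (fa_mul (fa_pow fa_x i) (fa_pow fa_y j))"
    and E: "is_derA N E" and hE: "homog_derA N l E"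
  shows "\<exists>c. \<exists>a\<in>fa_carrier. \<forall>f\<in>fa_carrier.
           eqA N (E f) (fa_add (fa_smul c (D f)) (fa_sub (fa_mul a f) (fa_mul f a)))"
proof -
  have N: "N \<ge> 1" using N2 by simp
  have Dc: "D f \<in> fa_carrier" and Ec: "E f \<in> fa_carrier" if "f \<in> fa_carrier" for f
    using is_derAD(1)[OF D that] is_derAD(1)[OF E that] .
  have rep_D: "der_op_of N D (rep N (pm_of f)) = rep N (pm_of (D f))"
    and rep_E: "der_op_of N E (rep N (pm_of f)) = rep N (pm_of (E f))" if "f \<in> fa_carrier" for f
    using der_op_of_rep[OF N D, of "pm_of f"] der_op_of_rep[OF N E, of "pm_of f"] that by simp_all
  have xy: "fa_mul (fa_pow fa_x i) (fa_pow fa_y j) = fa_of (x_pm ^ i * y_pm ^ j :: 'k fpm)"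
    by (simp add: fa_of_mult fa_of_power fa_of_x_pm fa_of_y_pm)
  have "der_op_of N D X_op = rep N (pm_of (D fa_x))"
    using rep_D[OF fa_x_carrier] by (simp add: pm_of_fa_x rep_x_pm)
  also have "\<dots> = rep N (x_pm ^ i * y_pm ^ j)"
    using Dx eqA_iff_rep[OF N Dc[OF fa_x_carrier] fa_of_carrier] by (simp add: xy)
  finally have DX: "der_op_of N D X_op = X_op ^ i * Y_op N ^ j"
    by (simp add: rep_mult rep_power rep_x_pm rep_y_pm)
  have hDY: "homog_op N (l + (N - 1)) (der_op_of N D (Y_op N))"
    using homog_op_der_op_of[OF N D hD rep_alg_Y homog_op_Y] by (simp add: add.commute)
  obtain c A where cA: "A \<in> rep_alg N"
      "\<forall>T\<in>rep_alg N. der_op_of N E T = scal_op c * der_op_of N D T + (A * T - T * A)"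
    using der_op_classification[OF N2 l1 lij i1 iN is_der_op_der_op_of[OF N E]
        homog_op_der_op_of[OF N E hE] is_der_op_der_op_of[OF N D] DX hDY] by blast
  obtain a where a: "A = rep N a" using cA(1) by (auto simp: rep_alg_def)
  show ?thesis
  proof (intro exI[of _ c] bexI[of _ "fa_of a"] ballI)
    fix f :: "'k fa" assume f: "f \<in> fa_carrier"
    have rc: "fa_add (fa_smul c (D f)) (fa_sub (fa_mul (fa_of a) f) (fa_mul f (fa_of a))) \<in> fa_carrier"
      by (simp add: fa_carrier_add fa_carrier_smul fa_carrier_sub fa_carrier_mul Dc f)
    have "rep N (pm_of (E f))
        = rep N (pm_of (fa_add (fa_smul c (D f)) (fa_sub (fa_mul (fa_of a) f) (fa_mul f (fa_of a)))))"
      using cA(2) rep_E[OF f] rep_D[OF f] a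
      by (simp add: pm_of_add pm_of_smul pm_of_sub pm_of_mult fa_carrier_smul fa_carrier_sub
          fa_carrier_mul Dc f rep_add rep_mult rep_diff rep_scal_pm)
    thus "eqA N (E f) (fa_add (fa_smul c (D f)) (fa_sub (fa_mul (fa_of a) f) (fa_mul f (fa_of a))))"
      using eqA_iff_rep[OF N Ec[OF f] rc] by simp
  qed simp
qed

lemma rep_Phi:
  assumes N: "N \<ge> 1" and k: "k \<ge> 1"
  shows "homog_op N (k * (N - 1)) (rep N (pm_of (Phi N k :: 'k::field_char_0 fa)))"
    and "rep N (pm_of (Phi N k :: 'k fa)) * X_op - X_op * rep N (pm_of (Phi N k :: 'k fa))
      = X_op ^ N * Y_op N ^ (k - 1)"
proof -
  have Pc: "Phi N k \<in> (fa_carrier :: 'k fa set)" and Ph: "homogA N (k * (N - 1)) (Phi N k :: 'k fa)"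
    and Pe: "eqA N (fa_sub (fa_mul (Phi N k) fa_x) (fa_mul fa_x (Phi N k)))
                   (fa_mul (fa_pow fa_x N) (fa_pow fa_y (k - 1)) :: 'k fa)"
    using is_Phi_Phi[OF N k] unfolding is_Phi_def by auto
  show "homog_op N (k * (N - 1)) (rep N (pm_of (Phi N k :: 'k fa)))"
    using Ph homogA_iff_homog_op[OF N Pc] by simp
  have c1: "fa_sub (fa_mul (Phi N k) fa_x) (fa_mul fa_x (Phi N k)) \<in> (fa_carrier :: 'k fa set)"
    by (simp add: fa_carrier_sub fa_carrier_mul Pc flip: fa_of_x_pm)
  have c2: "fa_mul (fa_pow fa_x N) (fa_pow fa_y (k - 1)) \<in> (fa_carrier :: 'k fa set)"
    by (simp add: fa_carrier_mul flip: fa_of_x_pm fa_of_y_pm fa_of_power)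
  have "rep N (pm_of (fa_sub (fa_mul (Phi N k) fa_x) (fa_mul fa_x (Phi N k)) :: 'k fa))
      = rep N (pm_of (fa_mul (fa_pow fa_x N) (fa_pow fa_y (k - 1)) :: 'k fa))"
    using Pe eqA_iff_rep[OF N c1 c2] by simp
  thus "rep N (pm_of (Phi N k :: 'k fa)) * X_op - X_op * rep N (pm_of (Phi N k :: 'k fa))
      = X_op ^ N * Y_op N ^ (k - 1)"
    by (simp add: pm_of_sub pm_of_mult fa_carrier_mul Pc pm_of_fa_x rep_diff rep_mult rep_x_pm rep_y_pm
        flip: fa_of_x_pm fa_of_y_pm fa_of_power) (simp add: rep_power rep_x_pm rep_y_pm)
qed

definition partial_y_pm :: "nat \<Rightarrow> nat \<Rightarrow> nat \<Rightarrow> 'k::field_char_0 fpm" where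
  "partial_y_pm N i j =
     (\<Sum>s<N - 1. scal_pm (of_nat (s + 1)) * (x_pm ^ (s + i) * y_pm ^ j * x_pm ^ (N - 2 - s)))
     + scal_pm (of_nat (N - i)) * (x_pm ^ (i - 1) * pm_of (Phi N (j + 1)))"

definition partial_der :: "nat \<Rightarrow> nat \<Rightarrow> nat \<Rightarrow> 'k::field_char_0 fa \<Rightarrow> 'k fa" where
  "partial_der N i j = der_fa (x_pm ^ i * y_pm ^ j) (partial_y_pm N i j)"

lemma partial_der_x: "partial_der N i j fa_x = fa_of (x_pm ^ i * y_pm ^ j)"
  by (simp add: partial_der_def der_fa_def pm_of_fa_x der_pm_x_pm)

lemma partial_der_y: "partial_der N i j fa_y = fa_of (partial_y_pm N i j)"
  by (simp add: partial_der_def der_fa_def pm_of_fa_y der_pm_y_pm)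

lemma partial_der_y_eq:
  assumes N: "N \<ge> 1"
  shows "partial_der N i j fa_y = fa_add
    (\<lambda>w. \<Sum>s<N - 1. of_nat (s + 1) *
       fa_mul (fa_mul (fa_pow fa_x (s + i)) (fa_pow fa_y j)) (fa_pow fa_x (N - 2 - s)) w)
    (fa_smul (of_nat (N - i)) (fa_mul (fa_pow fa_x (i - 1)) (Phi N (j + 1) :: 'k::field_char_0 fa)))"
proof -
  have "is_Phi N (j + 1) (Phi N (j + 1) :: 'k fa)" by (rule is_Phi_Phi[OF N]) simp
  hence Pc: "Phi N (Suc j) \<in> (fa_carrier :: 'k fa set)" by (simp add: is_Phi_def)
  show ?thesis
    unfolding partial_der_y partial_y_pm_def fa_of_add fa_of_sum_scal
    by (simp only: fa_of_smul) (simp add: fa_of_mult fa_of_power fa_of_x_pm fa_of_y_pm Pc)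
qed

lemma rep_partial_y_pm:
  assumes K: "N = Suc K"
  shows "rep N (partial_y_pm N i j :: 'k::field_char_0 fpm)
    = (\<Sum>s<K. of_nat (Suc s) * (X_op ^ (s + i) * Y_op N ^ j * X_op ^ (K - 1 - s)))
      + of_nat (Suc K - i) * (X_op ^ (i - 1) * rep N (pm_of (Phi N (j + 1) :: 'k fa)))"
  by (simp add: K partial_y_pm_def rep_add rep_sum rep_mult rep_scal_pm rep_power rep_x_pm rep_y_pm
      scal_op_of_nat del: of_nat_Suc)

lemma der_pm_relator_partial:
  assumes N: "N \<ge> 1" and i1: "1 \<le> i" and iN: "i \<le> N - 1"
  shows "der_pm (x_pm ^ i * y_pm ^ j) (partial_y_pm N i j) (relator_pm N)
    \<in> (ideal_pm N :: 'k::field_char_0 fpm set)"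
proof (rule rep_kernel[OF N])
  obtain K where K: "N = Suc K" using N by (cases N) auto
  define U where "U = (x_pm ^ i * y_pm ^ j :: 'k fpm)"
  define V where "V = (partial_y_pm N i j :: 'k fpm)"
  have \<Phi>: "rep N (pm_of (Phi N (j + 1) :: 'k fa)) * X_op - X_op * rep N (pm_of (Phi N (j + 1) :: 'k fa))
      = X_op ^ N * Y_op N ^ j"
    using rep_Phi(2)[OF N, of "j + 1"] by simp
  have "der_pm U V (relator_pm N)
      = (V * x_pm + y_pm * U) - (U * y_pm + x_pm * V) - (\<Sum>k<N. x_pm ^ k * U * x_pm ^ (N - 1 - k))"
    by (simp add: relator_pm_def der_pm_diff der_pm_mult der_pm_x_pm der_pm_y_pm der_pm_pow)
  hence "rep N (der_pm U V (relator_pm N))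
      = (rep N V * X_op + Y_op N * (X_op ^ i * Y_op N ^ j)) - (X_op ^ i * Y_op N ^ j * Y_op N + X_op * rep N V)
        - (\<Sum>k<N. X_op ^ k * (X_op ^ i * Y_op N ^ j) * X_op ^ (N - 1 - k))"
    by (simp add: rep_diff rep_add rep_mult rep_sum rep_x_pm rep_y_pm rep_power U_def)
  also have "\<dots> = 0"
    unfolding V_def rep_partial_y_pm[OF K] unfolding K diff_Suc_1
    by (rule der_relator_identity[OF Y_X_relation[OF N, unfolded K] \<Phi>[unfolded K]
          i1 le_SucI[OF iN[unfolded K diff_Suc_1]]])
  finally show "(rep N (der_pm (x_pm ^ i * y_pm ^ j) (partial_y_pm N i j) (relator_pm N)) :: 'k lin_op) = 0"
    by (simp only: U_def V_def)
qed

lemma is_derA_partial_der: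
  "N \<ge> 1 \<Longrightarrow> 1 \<le> i \<Longrightarrow> i \<le> N - 1 \<Longrightarrow> is_derA N (partial_der N i j :: 'k::field_char_0 fa \<Rightarrow> 'k fa)"
  unfolding partial_der_def by (rule is_derA_der_fa[OF der_pm_relator_partial])

lemma homog_derA_partial_der:
  assumes N: "N \<ge> 1" and lij: "l + 1 = i + j * (N - 1)" and i1: "1 \<le> i" and iN: "i \<le> N - 1"
  shows "homog_derA N l (partial_der N i j :: 'k::field_char_0 fa \<Rightarrow> 'k fa)"
proof (rule homog_derA_of_generators[OF N is_derA_partial_der[OF N i1 iN]])
  obtain K where K: "N = Suc K" using N by (cases N) auto
  show "homogA N (Suc l) (partial_der N i j fa_x :: 'k fa)"
    using homog_op_mult[OF N rep_alg_pow[OF rep_alg_X] homog_op_Xpow[of N i] homog_op_Ypow[of N j]] lij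
    by (simp add: partial_der_x homogA_fa_of_iff[OF N] rep_mult rep_power rep_x_pm rep_y_pm)
  have "homog_op N (l + (N - 1)) (of_nat (Suc s) * (X_op ^ (s + i) * Y_op N ^ j * X_op ^ (K - 1 - s) :: 'k lin_op))"
    if "s < K" for s
  proof -
    have "homog_op N ((s + i) + j * (N - 1) + (K - 1 - s)) (X_op ^ (s + i) * Y_op N ^ j * X_op ^ (K - 1 - s) :: 'k lin_op)"
      by (intro homog_op_mult[OF N] homog_op_Xpow homog_op_Ypow rep_alg_mult rep_alg_pow rep_alg_X rep_alg_Y)
    moreover have "(s + i) + j * (N - 1) + (K - 1 - s) = l + (N - 1)" using that lij K by simp
    ultimately show ?thesis using homog_op_of_nat by metis
  qed
  moreover have "homog_op N (l + (N - 1)) (of_nat (Suc K - i) * (X_op ^ (i - 1) * rep N (pm_of (Phi N (j + 1) :: 'k fa))))"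
  proof -
    have "homog_op N ((i - 1) + Suc j * (N - 1)) (X_op ^ (i - 1) * rep N (pm_of (Phi N (j + 1) :: 'k fa)))"
      using rep_Phi(1)[OF N, of "Suc j"] by (intro homog_op_mult[OF N] homog_op_Xpow rep_alg_pow rep_alg_X) simp_all
    moreover have "(i - 1) + Suc j * (N - 1) = l + (N - 1)" using i1 lij K by simp
    ultimately show ?thesis using homog_op_of_nat by metis
  qed
  ultimately show "homogA N (l + (N - 1)) (partial_der N i j fa_y :: 'k fa)"
    unfolding partial_der_y homogA_fa_of_iff[OF N] rep_partial_y_pm[OF K]
    by (intro homog_op_add homog_op_sum) auto
qed

theorem proposition5p7:
  fixes N l i j :: nat
  assumes "N \<ge> 2" and "l \<ge> 1"
    and "l + 1 = i + j * (N - 1)" and "1 \<le> i" and "i \<le> N - 1"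
  shows "\<exists>D :: 'k::field_char_0 fa \<Rightarrow> 'k fa.
     is_derA N D \<and> homog_derA N l D \<and>
     eqA N (D fa_x) (fa_mul (fa_pow fa_x i) (fa_pow fa_y j)) \<and>
     eqA N (D fa_y)
       (fa_add
         (\<lambda>w. \<Sum>s<N - 1. of_nat (s + 1) *
            fa_mul (fa_mul (fa_pow fa_x (s + i)) (fa_pow fa_y j)) (fa_pow fa_x (N - 2 - s)) w)
         (fa_smul (of_nat (N - i)) (fa_mul (fa_pow fa_x (i - 1)) (Phi N (j + 1))))) \<and>
     (\<forall>E. is_derA N E \<and> homog_derA N l E \<longrightarrow>
        (\<exists>c. \<exists>a\<in>fa_carrier. \<forall>f\<in>fa_carrier.
           eqA N (E f) (fa_add (fa_smul c (D f)) (fa_sub (fa_mul a f) (fa_mul f a)))))"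
proof -
  have N: "N \<ge> 1" using assms(1) by simp
  have D: "is_derA N (partial_der N i j :: 'k fa \<Rightarrow> 'k fa)"
    by (rule is_derA_partial_der[OF N assms(4,5)])
  have hD: "homog_derA N l (partial_der N i j :: 'k fa \<Rightarrow> 'k fa)"
    by (rule homog_derA_partial_der[OF N assms(3-5)])
  have Dx: "eqA N (partial_der N i j fa_x) (fa_mul (fa_pow fa_x i) (fa_pow fa_y j) :: 'k fa)"
    by (simp add: partial_der_x fa_of_mult fa_of_power fa_of_x_pm fa_of_y_pm eqA_refl)
  show ?thesis
    using D hD Dx derA_classification[OF assms D hD Dx]
    by (intro exI[of _ "partial_der N i j"]) (auto simp: partial_der_y_eq[OF N] eqA_refl)
qed

end
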